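(* The forcing $\tilde{\mathbb E}$, with the functions $\operatorname{stem}$ and $\operatorname{loss}$ (defined on $Q'=\operatorname{dom}(\operatorname{loss})$), has strong FAM-limits for intervals: for every FAM $\Xi$ there is a function $\lim_\Xi:\tilde{\mathbb E}^\omega\to\tilde{\mathbb E}$ which is a strong FAM limit for intervals.
   Context: Fix an interval partition $(I_k)_{k\in\omega}$ of $\omega$ into finite intervals with $|I_k|\to\infty$. A partial FAM is a finitely additive probability measure on a Boolean subalgebra of $\mathcal P(\omega)$ containing all singletons and assigning them measure $0$; a FAM is a partial FAM with domain $\mathcal P(\omega)$. $T^*$, $\Omega_s$, $\mu_s$: defined by induction on height $h\ge0$: $T^*\cap\omega^0=\{\langle\rangle\}$; $\rho(h)=\max(|T^*\cap\omega^h|,h+2)$, $\pi(h)=((h+1)^2\rho(h)^{h+1})^{\rho(h)^h}$, $a(h)=\pi(h)^{h+2}$, $M(h)=a(h)^2$; each $s\in T^*\cap\omega^h$ has successor set $\Omega_s=\{s^\frown\ell:\ell<M(h)\}$; $\mu_s(A)=\log_{a(h)}\big(\frac{M(h)}{M(h)-|A|}\big)$ for $A\subsetneq\Omega_s$ and $\mu_s(\Omega_s)=\infty$. For a subtree $p\subseteq T^*$ and $s\in p$, $\mu_s(p)=\mu_s(p\cap\Omega_s)$; the stem of $p$ is its shortest splitting node. $\tilde{\mathbb E}$ consists of subtrees $p\subseteq T^*$ with stem of height $h^*$ such that $\mu_t(p)\ge1+\frac1{h^*}$ for all $t\in p$ extending the stem, ordered by inclusion. $\operatorname{stem}(p)$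 is the stem; $\operatorname{loss}(p)$ is defined iff there is an integer $m\ge2$ with stem height $h^*>3m$ and $\mu_s(p)\ge1+\frac1m$ for all $s\in p$ of height $\ge h^*$, and then $\operatorname{loss}(p)=\frac1m$ for the maximal such $m$. For a pair $(s^*,l^* )$, an $(s^*,l^* )$-sequence is a sequence $(q_\ell)_{\ell\in\omega}$ of conditions with $\operatorname{stem}(q_\ell)=s^*$ and $\operatorname{loss}(q_\ell)=l^*$ for all $\ell$. Given a FAM $\Xi$, a function $\lim_\Xi$ from sequences of conditions to conditions is a strong FAM limit for intervals if: for every pair $(s^*,l^* )$, every $j^*\in\omega$ and $(s^*,l^* )$-sequences $\bar q^j$ ($j<j^*$), every $\epsilon>0$, $k^*\in\omega$, every finite partition $(B_m)_{m<m^*}$ of $\omega$, and every condition $q$ stronger than all $\lim_\Xi(\bar q^j)$ ($j<j^*$), there are a nonempty finite $u\subseteq\omega\setminus k^*$ and a condition $q'\le q$ such that $\Xi(B_m)-\epsilon<\frac{|u\cap B_m|}{|u|}<\Xi(B_m)+\epsilon$ for all $m<m^*$, and $\frac1{|u|}\sum_{k\in u}\frac{|\{\ell\in I_k:\ q'\le q^j_\ell\}|}{|I_k|}\ge1-l^*-\epsilon$ for all $j<j^*$. *)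

theory Defs
  imports Complex_Main "HOL-Library.Extended_Real"
begin

definition rho_of :: "nat \<Rightarrow> nat \<Rightarrow> nat" where
  "rho_of h L = max L (h + 2)"
definition pi_of :: "nat \<Rightarrow> nat \<Rightarrow> nat" where
  "pi_of h L = ((h + 1)^2 * (rho_of h L)^(h + 1)) ^ ((rho_of h L)^h)"
definition a_of :: "nat \<Rightarrow> nat \<Rightarrow> nat" where
  "a_of h L = (pi_of h L)^(h + 2)"
definition M_of :: "nat \<Rightarrow> nat \<Rightarrow> nat" where
  "M_of h L = (a_of h L)^2"

text \<open>Level h of T* (nodes are lists; s concatenated with l is s @ [l]).\<close>
primrec Tlev :: "nat \<Rightarrow> nat list set" where
  "Tlev 0 = {[]}"
| "Tlev (Suc h) = {s @ [l] | s l. s \<in> Tlev h \<and> l < M_of h (card (Tlev h))}"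

definition Tstar :: "nat list set" where
  "Tstar = (\<Union>h. Tlev h)"

definition rhoT :: "nat \<Rightarrow> nat" where "rhoT h = rho_of h (card (Tlev h))"
definition piT :: "nat \<Rightarrow> nat" where "piT h = pi_of h (card (Tlev h))"
definition aT :: "nat \<Rightarrow> nat" where "aT h = a_of h (card (Tlev h))"
definition MT :: "nat \<Rightarrow> nat" where "MT h = M_of h (card (Tlev h))"

definition Omega :: "nat list \<Rightarrow> nat list set" where
  "Omega s = {s @ [l] | l. l < MT (length s)}"

definition mu_set :: "nat list \<Rightarrow> nat list set \<Rightarrow> ereal" where
  "mu_set s A = (if A = Omega s then \<infinity>
     else ereal (log (real (aT (length s)))
                  (real (MT (length s)) / (real (MT (length s)) - real (card A)))))"

definition mu :: "nat list \<Rightarrow> nat list set \<Rightarrow> ereal" where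
  "mu s p = mu_set s (p \<inter> Omega s)"

definition subtree :: "nat list set \<Rightarrow> bool" where
  "subtree p \<longleftrightarrow> p \<subseteq> Tstar \<and> p \<noteq> {} \<and> (\<forall>s u. s @ u \<in> p \<longrightarrow> s \<in> p)"

definition splitting :: "nat list set \<Rightarrow> nat list \<Rightarrow> bool" where
  "splitting p s \<longleftrightarrow> s \<in> p \<and> card (p \<inter> Omega s) \<ge> 2"

definition is_stem :: "nat list set \<Rightarrow> nat list \<Rightarrow> bool" where
  "is_stem p s \<longleftrightarrow> splitting p s \<and> (\<forall>t. splitting p t \<longrightarrow> length s \<le> length t)"

definition stem :: "nat list set \<Rightarrow> nat list" where
  "stem p = (THE s. is_stem p s)"

text \<open>The bound 1 + 1/h*, where 1/0 is read as infinity (extended reals).\<close>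
definition bound :: "nat \<Rightarrow> ereal" where
  "bound h = (if h = 0 then \<infinity> else 1 + ereal (1 / real h))"

definition in_E :: "nat list set \<Rightarrow> bool" where
  "in_E p \<longleftrightarrow> subtree p \<and>
     (\<exists>s. is_stem p s \<and> (\<forall>t\<in>p. (\<exists>u. t = s @ u) \<longrightarrow> mu t p \<ge> bound (length s)))"

definition loss_set :: "nat list set \<Rightarrow> nat set" where
  "loss_set p = {m. m \<ge> 2 \<and> length (stem p) > 3 * m \<and>
     (\<forall>s\<in>p. length s \<ge> length (stem p) \<longrightarrow> mu s p \<ge> 1 + ereal (1 / real m))}"

definition loss :: "nat list set \<Rightarrow> real option" where
  "loss p = (if loss_set p = {} then None else Some (1 / real (Max (loss_set p))))"

definition FAM :: "(nat set \<Rightarrow> real) \<Rightarrow> bool" where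
  "FAM \<Xi> \<longleftrightarrow> (\<forall>A. \<Xi> A \<ge> 0) \<and> \<Xi> UNIV = 1 \<and>
     (\<forall>A B. A \<inter> B = {} \<longrightarrow> \<Xi> (A \<union> B) = \<Xi> A + \<Xi> B) \<and> (\<forall>n. \<Xi> {n} = 0)"

definition interval_partition :: "(nat \<Rightarrow> nat set) \<Rightarrow> bool" where
  "interval_partition I \<longleftrightarrow>
     (\<exists>b. b 0 = 0 \<and> strict_mono b \<and> (\<forall>k. I k = {b k..<b (Suc k)}))"

definition sl_sequence :: "nat list \<Rightarrow> real \<Rightarrow> (nat \<Rightarrow> nat list set) \<Rightarrow> bool" where
  "sl_sequence s l q \<longleftrightarrow> (\<forall>n. in_E (q n) \<and> stem (q n) = s \<and> loss (q n) = Some l)"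

definition strong_FAM_limit_intervals ::
  "(nat \<Rightarrow> nat set) \<Rightarrow> (nat set \<Rightarrow> real) \<Rightarrow> ((nat \<Rightarrow> nat list set) \<Rightarrow> nat list set) \<Rightarrow> bool" where
  "strong_FAM_limit_intervals I \<Xi> limf \<longleftrightarrow>
    (\<forall>s l (jstar::nat) (qs :: nat \<Rightarrow> nat \<Rightarrow> nat list set) (\<epsilon>::real) (kstar::nat)
       (B :: nat \<Rightarrow> nat set) (mstar::nat) q.
      (\<forall>j<jstar. sl_sequence s l (qs j)) \<and> \<epsilon> > 0 \<and>
      (\<forall>m<mstar. \<forall>m'<mstar. m \<noteq> m' \<longrightarrow> B m \<inter> B m' = {}) \<and> (\<Union>m<mstar. B m) = UNIV \<and>
      in_E q \<and> (\<forall>j<jstar. q \<subseteq> limf (qs j)) \<longrightarrow>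
      (\<exists>u q'. finite u \<and> u \<noteq> {} \<and> u \<inter> {..<kstar} = {} \<and> in_E q' \<and> q' \<subseteq> q \<and>
         (\<forall>m<mstar. \<Xi> (B m) - \<epsilon> < real (card (u \<inter> B m)) / real (card u) \<and>
                    real (card (u \<inter> B m)) / real (card u) < \<Xi> (B m) + \<epsilon>) \<and>
         (\<forall>j<jstar. (1 / real (card u)) *
             (\<Sum>k\<in>u. real (card {n \<in> I k. q' \<subseteq> qs j n}) / real (card (I k)))
           \<ge> 1 - l - \<epsilon>)))"

end

theory Submission
  imports Defs "HOL-Library.Sublist"
begin

section \<open>The tree T* and its norms\<close>

lemma mem_Tlev_iff: "t \<in> Tlev h \<longleftrightarrow> length t = h \<and> (\<forall>j<h. t!j < MT j)"
proof (induction h arbitrary: t)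
  case 0 then show ?case by auto
next
  case (Suc h)
  show ?case
  proof
    assume "t \<in> Tlev (Suc h)"
    then obtain s l where "t = s @ [l]" "s \<in> Tlev h" "l < MT h" by (auto simp: MT_def)
    then show "length t = Suc h \<and> (\<forall>j<Suc h. t!j < MT j)"
      using Suc.IH by (auto simp: nth_append less_Suc_eq)
  next
    assume t: "length t = Suc h \<and> (\<forall>j<Suc h. t!j < MT j)"
    then have "t = butlast t @ [last t]"
      by (metis append_butlast_last_id list.size(3) nat.simps(3))
    moreover have "butlast t \<in> Tlev h" using Suc.IH t by (auto simp: nth_butlast)
    moreover have "last t < MT h" using t by (subst last_conv_nth) auto
    ultimately show "t \<in> Tlev (Suc h)" by (auto simp: MT_def)
  qed
qed

lemma mem_Tstar_iff: "t \<in> Tstar \<longleftrightarrow> (\<forall>j<length t. t!j < MT j)"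
  unfolding Tstar_def using mem_Tlev_iff by auto

lemma Tstar_prefix_closed: "x \<in> Tstar \<Longrightarrow> prefix y x \<Longrightarrow> y \<in> Tstar"
  by (auto simp: mem_Tstar_iff prefix_def) (metis nth_append trans_less_add1 length_append)

lemma Omega_eq_image: "Omega t = (\<lambda>l. t @ [l]) ` {..<MT (length t)}"
  unfolding Omega_def by auto

lemma finite_Omega [simp]: "finite (Omega t)"
  by (simp add: Omega_eq_image)

lemma card_Omega: "card (Omega t) = MT (length t)"
  unfolding Omega_eq_image by (subst card_image) (auto simp: inj_on_def)

lemma Omega_prefix: "x \<in> Omega t \<Longrightarrow> prefix t x \<and> length x = Suc (length t)"
  unfolding Omega_def by auto

lemma Omega_subset_Tstar: "t \<in> Tstar \<Longrightarrow> Omega t \<subseteq> Tstar"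
  by (auto simp: Omega_def mem_Tstar_iff nth_append less_Suc_eq)

lemma take_Suc_mem_Omega:
  assumes "s \<in> Tstar" "j < length s"
  shows "take (Suc j) s \<in> Omega (take j s)"
  using assms by (auto simp: Omega_def mem_Tstar_iff take_Suc_conv_app_nth)

lemma piT_ge_two_power: "piT h \<ge> 2^(h+1)"
proof -
  define r where "r = rho_of h (card (Tlev h))"
  have r: "r \<ge> 2" unfolding r_def rho_of_def by auto
  have "(2::nat)^(h+1) \<le> r^(h+1)" by (rule power_mono) (use r in auto)
  also have "\<dots> \<le> (h+1)^2 * r^(h+1)" by simp
  also have "\<dots> \<le> ((h+1)^2 * r^(h+1))^(r^h)"
    using r by (intro self_le_power) auto
  finally show ?thesis unfolding piT_def pi_of_def r_def .
qed

lemma piT_ge_two: "piT h \<ge> 2"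
  using piT_ge_two_power[of h] self_le_power[of "2::nat" "h+1"] by linarith

lemma aT_eq_piT_power: "aT h = piT h ^ (h+2)"
  unfolding aT_def piT_def a_of_def by simp

lemma MT_eq_aT_square: "MT h = aT h ^ 2"
  unfolding aT_def MT_def M_of_def by simp

lemma piT_le_aT: "piT h \<le> aT h"
  using power_increasing[of 1 "h+2" "piT h"] piT_ge_two[of h] by (simp add: aT_eq_piT_power)

lemma aT_ge_two: "aT h \<ge> 2"
  using piT_le_aT[of h] piT_ge_two[of h] by linarith

lemma aT_powr: "real (aT h) powr x = real (piT h) powr (real (h+2) * x)"
proof -
  have p: "real (piT h) > 0" using piT_ge_two[of h] by simp
  have "real (aT h) = real (piT h) powr real (h+2)"
    unfolding aT_eq_piT_power using p by (subst powr_realpow) simp_all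
  then show ?thesis using p by (simp add: powr_powr)
qed

lemma piT_le_aT_root:
  assumes "1 \<le> H" "H \<le> h"
  shows "real (piT h) \<le> real (aT h) powr (1 / real H)"
proof -
  have p: "real (piT h) \<ge> 1" using piT_ge_two[of h] by simp
  have "real (piT h) powr 1 \<le> real (piT h) powr (real (h+2) * (1 / real H))"
    using assms p by (intro powr_mono) (auto simp: field_simps)
  then show ?thesis using p by (simp add: aT_powr)
qed

lemma mu_ge_iff_card_missing:
  assumes "r > 0"
  shows "1 + ereal (1/r) \<le> mu t p \<longleftrightarrow>
         real (card (Omega t - p)) \<le> real (aT (length t)) powr (1 - 1/r)"
proof -
  let ?a = "real (aT (length t))" and ?M = "real (MT (length t))"
  let ?A = "p \<inter> Omega t"
  have a2: "?a \<ge> 2" using aT_ge_two[of "length t"] by linarith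
  have M: "?M = ?a powr 2" using a2 by (simp add: MT_eq_aT_square powr_numeral)
  show ?thesis
  proof (cases "?A = Omega t")
    case True
    then have "Omega t - p = {}" by auto
    then show ?thesis unfolding \<open>Omega t - p = {}\<close> using True by (simp add: mu_def mu_set_def)
  next
    case False
    then have "card ?A < MT (length t)"
      using psubset_card_mono[of "Omega t" ?A] card_Omega by auto
    moreover have "card (Omega t - p) = MT (length t) - card ?A"
      using card_Diff_subset[of ?A "Omega t"] by (simp add: card_Omega Diff_Int)
    ultimately obtain X where X: "X = real (card (Omega t - p))" "X = ?M - real (card ?A)" "X > 0"
      by simp
    have mu: "mu t p = ereal (log ?a (?M / X))"
      using False by (simp add: mu_def mu_set_def X(2))
    have "1 + ereal (1/r) \<le> mu t p \<longleftrightarrow> 1 + 1/r \<le> log ?a (?M / X)"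
      unfolding mu by (simp add: one_ereal_def)
    also have "\<dots> \<longleftrightarrow> ?a powr (1 + 1/r) \<le> ?M / X"
      using a2 X(3) M by (subst le_log_iff) auto
    also have "\<dots> \<longleftrightarrow> X * ?a powr (1 + 1/r) \<le> ?a powr (1 + 1/r) * ?a powr (1 - 1/r)"
      using X(3) by (simp add: M field_simps flip: powr_add)
    also have "\<dots> \<longleftrightarrow> X \<le> ?a powr (1 - 1/r)"
      using a2 by (simp add: mult.commute)
    finally show ?thesis using X(1) by simp
  qed
qed

lemma bound_le_mu_iff:
  "bound h \<le> mu t p \<longleftrightarrow>
     (if h = 0 then Omega t \<subseteq> p
      else real (card (Omega t - p)) \<le> real (aT (length t)) powr (1 - 1/real h))"
proof (cases "h = 0")
  case True
  have "\<infinity> \<le> mu t p \<longleftrightarrow> p \<inter> Omega t = Omega t"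
    by (auto simp: mu_def mu_set_def)
  then show ?thesis using True by (auto simp: bound_def)
next
  case False
  then show ?thesis using mu_ge_iff_card_missing[of "real h" t p] by (simp add: bound_def)
qed

lemma two_le_card_successors:
  assumes "real (card (Omega t - p)) \<le> real (aT (length t)) powr e" "e \<le> 1"
  shows "2 \<le> card (p \<inter> Omega t)"
proof -
  let ?a = "aT (length t)"
  have a2: "?a \<ge> 2" by (rule aT_ge_two)
  have "real (card (Omega t - p)) \<le> real ?a"
    using assms powr_mono[of e 1 "real ?a"] a2 by auto
  moreover have "card (Omega t) = card (p \<inter> Omega t) + card (Omega t - p)"
    using card_Int_Diff[of "Omega t" p] by (simp add: Int_commute)
  moreover have "card (Omega t) = ?a * ?a" by (simp add: card_Omega MT_eq_aT_square power2_eq_square)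
  moreover have "?a * ?a \<ge> 2 * ?a" using a2 by simp
  ultimately show ?thesis using a2 by linarith
qed

section \<open>Conditions\<close>

lemma prefix_length_antisym: "prefix xs ys \<Longrightarrow> length ys \<le> length xs \<Longrightarrow> xs = ys"
  by (auto simp: prefix_def)

lemma subtree_prefix_closed: "subtree p \<Longrightarrow> x \<in> p \<Longrightarrow> prefix y x \<Longrightarrow> y \<in> p"
  unfolding subtree_def prefix_def by auto

lemma first_difference:
  "length s = length s' \<Longrightarrow> s \<noteq> s' \<Longrightarrow> \<exists>j<length s. take j s = take j s' \<and> s!j \<noteq> s'!j"
proof (induction s arbitrary: s')
  case Nil then show ?case by auto
next
  case (Cons a s)
  then obtain b s'' where s': "s' = b # s''" by (cases s') auto
  show ?case
  proof (cases "a = b")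
    case False then show ?thesis using s' by force
  next
    case True
    then have "s \<noteq> s''" "length s = length s''" using Cons.prems s' by auto
    then obtain j where "j < length s" "take j s = take j s''" "s!j \<noteq> s''!j"
      using Cons.IH by blast
    then show ?thesis using s' True by (intro exI[of _ "Suc j"]) auto
  qed
qed

lemma is_stem_unique:
  assumes p: "subtree p" and s: "is_stem p s" and s': "is_stem p s'"
  shows "s = s'"
proof (rule ccontr)
  assume "s \<noteq> s'"
  moreover have len: "length s = length s'" using s s' unfolding is_stem_def by (meson le_antisym)
  ultimately obtain j where j: "j < length s" "take j s = take j s'" "s!j \<noteq> s'!j"
    using first_difference by blast
  let ?t = "take j s"
  have "s \<in> p" "s' \<in> p" using s s' unfolding is_stem_def splitting_def by auto
  then have "s \<in> Tstar" "s' \<in> Tstar" "prefix ?t s" "take (Suc j) s \<in> p" "take (Suc j) s' \<in> p"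
    using p subtree_prefix_closed[OF p] take_is_prefix unfolding subtree_def by blast+
  then have "{take (Suc j) s, take (Suc j) s'} \<subseteq> p \<inter> Omega ?t"
    using take_Suc_mem_Omega[of s j] take_Suc_mem_Omega[of s' j] j len by auto
  moreover have "take (Suc j) s \<noteq> take (Suc j) s'" using j len by (metis lessI nth_take)
  ultimately have "2 \<le> card (p \<inter> Omega ?t)"
    using card_mono[of "p \<inter> Omega ?t" "{take (Suc j) s, take (Suc j) s'}"] by simp
  then have "splitting p ?t"
    using subtree_prefix_closed[OF p \<open>s \<in> p\<close> \<open>prefix ?t s\<close>] by (simp add: splitting_def)
  then have "length s \<le> length ?t" using s unfolding is_stem_def by blast
  then show False using j(1) by simp
qed

lemma in_E_subtree: "in_E p \<Longrightarrow> subtree p"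
  unfolding in_E_def by blast

lemma in_E_is_stem:
  assumes "in_E p"
  shows "is_stem p (stem p)"
proof -
  obtain s where "is_stem p s" using assms unfolding in_E_def by blast
  then show ?thesis
    unfolding stem_def using is_stem_unique[OF in_E_subtree[OF assms]] by (metis theI)
qed

lemma in_E_stem_mem: "in_E p \<Longrightarrow> stem p \<in> p"
  using in_E_is_stem unfolding is_stem_def splitting_def by blast

lemma in_E_bound_le_mu:
  assumes "in_E p" "t \<in> p" "prefix (stem p) t"
  shows "bound (length (stem p)) \<le> mu t p"
proof -
  obtain s where s: "is_stem p s" "\<forall>t\<in>p. (\<exists>u. t = s @ u) \<longrightarrow> bound (length s) \<le> mu t p"
    using assms(1) unfolding in_E_def by blast
  have "s = stem p" using is_stem_unique[OF in_E_subtree] in_E_is_stem assms(1) s(1) by blast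
  then show ?thesis using s(2) assms(2,3) unfolding prefix_def by blast
qed

lemma is_stem_if_comparable:
  assumes p: "subtree p" and t: "t \<in> p" and comp: "\<forall>x\<in>p. prefix x t \<or> prefix t x"
    and split: "2 \<le> card (p \<inter> Omega t)"
  shows "is_stem p t"
  unfolding is_stem_def
proof (intro conjI allI impI)
  show "splitting p t" using t split by (simp add: splitting_def)
next
  fix x assume "splitting p x"
  then have x: "x \<in> p" "2 \<le> card (p \<inter> Omega x)" by (auto simp: splitting_def)
  show "length t \<le> length x"
  proof (rule ccontr)
    assume "\<not> length t \<le> length x"
    have "p \<inter> Omega x \<subseteq> {take (Suc (length x)) t}"
    proof
      fix y assume y: "y \<in> p \<inter> Omega x"
      then have "length y = Suc (length x)" by (simp add: Omega_prefix)
      moreover have "prefix y t \<or> prefix t y" using comp y by auto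
      ultimately have "prefix y t"
        using \<open>\<not> length t \<le> length x\<close> prefix_length_le[of t y] prefix_length_antisym[of t y]
        by fastforce
      then show "y \<in> {take (Suc (length x)) t}"
        using \<open>length y = Suc (length x)\<close> by (auto simp: prefix_def)
    qed
    then have "card (p \<inter> Omega x) \<le> 1" using card_mono[of "{take (Suc (length x)) t}"] by simp
    then show False using x by simp
  qed
qed

lemma in_E_intro:
  assumes p: "subtree p" and t: "t \<in> p" "length t > 0"
    and comp: "\<forall>x\<in>p. prefix x t \<or> prefix t x"
    and norm: "\<forall>x\<in>p. prefix t x \<longrightarrow>
              real (card (Omega x - p)) \<le> real (aT (length x)) powr (1 - 1/real (length t))"
  shows "in_E p" "stem p = t"
proof -
  have "2 \<le> card (p \<inter> Omega t)" using norm t by (intro two_le_card_successors) auto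
  then have stem: "is_stem p t" using is_stem_if_comparable[OF p t(1) comp] by blast
  have "\<forall>x\<in>p. (\<exists>u. x = t @ u) \<longrightarrow> bound (length t) \<le> mu x p"
    using norm t by (auto simp: bound_le_mu_iff prefix_def)
  then show "in_E p" using p stem unfolding in_E_def by blast
  show "stem p = t" unfolding stem_def using is_stem_unique[OF p] stem by blast
qed

lemma in_E_card_missing_le:
  assumes q: "in_E q" and t: "t \<in> q" "prefix (stem q) t"
    and e: "e \<le> 1" "length (stem q) = 0 \<or> 1 - 1/real (length (stem q)) \<le> e"
  shows "real (card (Omega t - q)) \<le> real (aT (length t)) powr e"
proof (cases "length (stem q) = 0")
  case True
  then have "Omega t - q = {}" using in_E_bound_le_mu[OF q t] bound_le_mu_iff by auto
  then show ?thesis unfolding \<open>Omega t - q = {}\<close> by simp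
next
  case False
  then have "real (card (Omega t - q)) \<le> real (aT (length t)) powr (1 - 1/real (length (stem q)))"
    using in_E_bound_le_mu[OF q t] bound_le_mu_iff by auto
  also have "\<dots> \<le> real (aT (length t)) powr e"
    using e False aT_ge_two[of "length t"] by (intro powr_mono) auto
  finally show ?thesis .
qed

lemma in_E_card_missing_le_aT:
  assumes "in_E q" "t \<in> q" "prefix (stem q) t"
  shows "real (card (Omega t - q)) \<le> real (aT (length t))"
  using in_E_card_missing_le[OF assms, of 1] by simp

lemma in_E_has_successor:
  assumes "in_E q" "t \<in> q" "prefix (stem q) t"
  shows "\<exists>y. y \<in> q \<inter> Omega t"
proof -
  have "2 \<le> card (q \<inter> Omega t)"
    using in_E_card_missing_le[OF assms, of 1] by (intro two_le_card_successors[of t q 1]) auto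
  then have "q \<inter> Omega t \<noteq> {}" by auto
  then show ?thesis by blast
qed

lemma in_E_card_successors_ge:
  assumes "in_E q" "t \<in> q" "prefix (stem q) t"
  shows "real (aT (length t)) * real (aT (length t)) - real (aT (length t)) \<le> real (card (q \<inter> Omega t))"
proof -
  have "card (Omega t) = card (q \<inter> Omega t) + card (Omega t - q)"
    using card_Int_Diff[of "Omega t" q] by (simp add: Int_commute)
  moreover have "real (card (Omega t)) = real (aT (length t)) * real (aT (length t))"
    by (simp add: card_Omega MT_eq_aT_square power2_eq_square)
  ultimately show ?thesis using in_E_card_missing_le_aT[OF assms] by simp
qed

lemma finite_loss_set: "finite (loss_set p)"
  by (rule finite_subset[of _ "{..<length (stem p)}"]) (auto simp: loss_set_def)

lemma loss_SomeD:
  assumes "loss p = Some l"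
  shows "Max (loss_set p) \<in> loss_set p" "l = 1 / real (Max (loss_set p))"
  using assms Max_in[OF finite_loss_set] unfolding loss_def by (auto split: if_splits)

lemma sl_sequence_stem:
  assumes "sl_sequence s l Q"
  shows "subtree (Q n)" "s \<in> Q n"
  using assms in_E_subtree[of "Q n"] in_E_stem_mem[of "Q n"] unfolding sl_sequence_def by auto

lemma sl_sequence_loss:
  assumes "sl_sequence s l Q"
  shows "\<exists>m. 2 \<le> m \<and> 3 * m < length s \<and> l = 1 / real m"
  using assms loss_SomeD[of "Q 0" l] unfolding sl_sequence_def loss_set_def by auto

lemma sl_sequence_card_missing_le:
  assumes sl: "sl_sequence s l Q" and l: "l = 1 / real m"
    and t: "t \<in> Q n" "length s \<le> length t"
  shows "real (card (Omega t - Q n)) \<le> real (aT (length t)) powr (1 - 1/real m)"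
proof -
  have Q: "stem (Q n) = s" "loss (Q n) = Some l" using sl unfolding sl_sequence_def by auto
  define M where "M = Max (loss_set (Q n))"
  have M: "M \<in> loss_set (Q n)" "l = 1 / real M" using loss_SomeD[OF Q(2)] M_def by auto
  then have "M = m" using l by (auto simp: loss_set_def)
  then have "1 + ereal (1 / real m) \<le> mu t (Q n)" using M(1) t Q(1) unfolding loss_set_def by auto
  moreover have "m > 0" using M \<open>M = m\<close> by (auto simp: loss_set_def)
  ultimately show ?thesis using mu_ge_iff_card_missing[of "real m"] by auto
qed

section \<open>Finitely additive measures\<close>

lemma sum_nat_floor_bounds:
  fixes f :: "'a \<Rightarrow> real" and c :: real
  assumes "finite S" "\<And>P. P \<in> S \<Longrightarrow> f P \<ge> 0" "c \<ge> 0"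
  shows "c * (\<Sum>P\<in>S. f P) - real (card S) \<le> (\<Sum>P\<in>S. real (nat \<lfloor>c * f P\<rfloor>))"
    and "(\<Sum>P\<in>S. real (nat \<lfloor>c * f P\<rfloor>)) \<le> c * (\<Sum>P\<in>S. f P)"
proof -
  have nonneg: "c * f P \<ge> 0" if "P \<in> S" for P using assms that by simp
  have "c * f P - 1 \<le> real (nat \<lfloor>c * f P\<rfloor>)" if "P \<in> S" for P
    using nonneg[OF that] real_of_int_floor_gt_diff_one[of "c * f P"] by simp
  then have "(\<Sum>P\<in>S. c * f P - 1) \<le> (\<Sum>P\<in>S. real (nat \<lfloor>c * f P\<rfloor>))"
    by (rule sum_mono)
  then show "c * (\<Sum>P\<in>S. f P) - real (card S) \<le> (\<Sum>P\<in>S. real (nat \<lfloor>c * f P\<rfloor>))"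
    by (simp add: sum_subtractf sum_distrib_left)
  have "(\<Sum>P\<in>S. real (nat \<lfloor>c * f P\<rfloor>)) \<le> (\<Sum>P\<in>S. c * f P)"
    using nonneg by (intro sum_mono of_nat_floor)
  then show "(\<Sum>P\<in>S. real (nat \<lfloor>c * f P\<rfloor>)) \<le> c * (\<Sum>P\<in>S. f P)"
    by (simp add: sum_distrib_left)
qed

lemma ratio_approx:
  fixes V U N R x \<epsilon> :: real
  assumes "\<bar>V - N * x\<bar> \<le> R" "\<bar>N - U\<bar> \<le> R" "0 \<le> x" "x \<le> 1" "0 < \<epsilon>" "2 * R / \<epsilon> < N - R"
  shows "\<bar>V / U - x\<bar> < \<epsilon>"
proof -
  have R: "R \<ge> 0" using assms(1) by linarith
  then have "0 \<le> 2 * R / \<epsilon>" using assms(5) by simp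
  moreover have "2 * R / \<epsilon> < U" using assms(2,6) by linarith
  ultimately have U: "U > 0" "2 * R < \<epsilon> * U"
    using assms(5) by (linarith, simp add: pos_divide_less_eq mult.commute)
  have "\<bar>N - U\<bar> * x \<le> R * 1" using assms(2-4) R by (intro mult_mono) auto
  then have "\<bar>(N - U) * x\<bar> \<le> R" using assms(3) by (simp add: abs_mult)
  then have "\<bar>V - U * x\<bar> \<le> 2 * R"
    using assms(1) by (simp add: abs_le_iff left_diff_distrib)
  moreover have "\<bar>V / U - x\<bar> = \<bar>V - U * x\<bar> / U" using U(1) by (simp add: field_simps)
  ultimately have "\<bar>V / U - x\<bar> \<le> 2 * R / U" using U(1) by (simp add: divide_right_mono)
  also have "\<dots> < \<epsilon>" using U by (simp add: pos_divide_less_eq mult.commute)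
  finally show ?thesis .
qed
definition atom :: "'i set \<Rightarrow> ('i \<Rightarrow> 'a set) \<Rightarrow> 'i set \<Rightarrow> 'a set" where
  "atom T A P = {k. {t\<in>T. k \<in> A t} = P}"

lemma atom_disjoint: "P \<noteq> P' \<Longrightarrow> atom T A P \<inter> atom T A P' = {}"
  unfolding atom_def by auto

lemma mem_atom_iff: "k \<in> atom T A P \<Longrightarrow> t \<in> T \<Longrightarrow> k \<in> A t \<longleftrightarrow> t \<in> P"
  unfolding atom_def by auto

lemma mem_atom_self: "k \<in> atom T A {t\<in>T. k \<in> A t}"
  unfolding atom_def by (rule CollectI) (rule refl)

lemma UN_atom: "(\<Union>P\<in>Pow T. atom T A P) = UNIV"
proof (intro set_eqI iffI)
  fix k show "k \<in> (\<Union>P\<in>Pow T. atom T A P)"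
    by (rule UN_I[of "{t\<in>T. k \<in> A t}"]) (blast, rule mem_atom_self)
qed auto

lemma UN_atom_eq:
  assumes "t \<in> T"
  shows "(\<Union>P\<in>{P\<in>Pow T. t \<in> P}. atom T A P) = A t"
proof (intro set_eqI iffI)
  fix k assume "k \<in> A t"
  then show "k \<in> (\<Union>P\<in>{P\<in>Pow T. t \<in> P}. atom T A P)"
    using assms by (intro UN_I[of "{t\<in>T. k \<in> A t}"]) (blast, rule mem_atom_self)
next
  fix k assume "k \<in> (\<Union>P\<in>{P\<in>Pow T. t \<in> P}. atom T A P)"
  then obtain P where "t \<in> P" "k \<in> atom T A P" by auto
  then show "k \<in> A t" using mem_atom_iff[of k T A P t] assms by simp
qed

context
  fixes \<Xi> :: "nat set \<Rightarrow> real"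
  assumes FAM: "FAM \<Xi>"
begin

lemma FAM_nonneg: "\<Xi> A \<ge> 0"
  using FAM unfolding FAM_def by auto

lemma FAM_UNIV: "\<Xi> UNIV = 1"
  using FAM unfolding FAM_def by auto

lemma FAM_Un: "A \<inter> B = {} \<Longrightarrow> \<Xi> (A \<union> B) = \<Xi> A + \<Xi> B"
  using FAM unfolding FAM_def by auto

lemma FAM_singleton: "\<Xi> {n} = 0"
  using FAM unfolding FAM_def by auto

lemma FAM_empty: "\<Xi> {} = 0"
  using FAM_Un[of "{}" "{}"] by simp

lemma FAM_mono: "B \<subseteq> A \<Longrightarrow> \<Xi> B \<le> \<Xi> A"
proof -
  assume "B \<subseteq> A"
  then have "B \<union> (A - B) = A" "B \<inter> (A - B) = {}" by auto
  then show ?thesis using FAM_Un[of B "A - B"] FAM_nonneg[of "A - B"] by simp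
qed

lemma FAM_le_1: "\<Xi> A \<le> 1"
  using FAM_mono[of A UNIV] FAM_UNIV by simp

lemma FAM_Diff_ge: "\<Xi> A - \<Xi> B \<le> \<Xi> (A - B)"
proof -
  have "(A - B) \<inter> (A \<inter> B) = {}" "(A - B) \<union> (A \<inter> B) = A" by auto
  then show ?thesis using FAM_Un[of "A - B" "A \<inter> B"] FAM_mono[of "A \<inter> B" B] by simp
qed

lemma FAM_finite: "finite A \<Longrightarrow> \<Xi> A = 0"
proof (induction A rule: finite_induct)
  case empty then show ?case by (rule FAM_empty)
next
  case (insert x A)
  then show ?case using FAM_Un[of "{x}" A] FAM_singleton[of x] by simp
qed

lemma FAM_UN_disjoint:
  assumes "finite S" "\<forall>i\<in>S. \<forall>j\<in>S. i \<noteq> j \<longrightarrow> X i \<inter> X j = {}"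
  shows "\<Xi> (\<Union>i\<in>S. X i) = (\<Sum>i\<in>S. \<Xi> (X i))"
  using assms
proof (induction S rule: finite_induct)
  case empty then show ?case by (simp add: FAM_empty)
next
  case (insert x S)
  then have "X x \<inter> (\<Union>i\<in>S. X i) = {}" by auto
  then have "\<Xi> (\<Union>i\<in>insert x S. X i) = \<Xi> (X x) + \<Xi> (\<Union>i\<in>S. X i)"
    using FAM_Un[of "X x" "\<Union>i\<in>S. X i"] by simp
  then show ?case using insert by simp
qed

lemma sum_FAM_atom:
  assumes "finite T"
  shows "(\<Sum>P\<in>Pow T. \<Xi> (atom T A P)) = 1"
proof -
  have "\<Xi> (\<Union>P\<in>Pow T. atom T A P) = (\<Sum>P\<in>Pow T. \<Xi> (atom T A P))"
    by (intro FAM_UN_disjoint) (auto simp: atom_disjoint assms)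
  then show ?thesis by (simp add: UN_atom FAM_UNIV)
qed

lemma FAM_eq_sum_atom:
  assumes "finite T" "t \<in> T"
  shows "\<Xi> (A t) = (\<Sum>P\<in>{P\<in>Pow T. t \<in> P}. \<Xi> (atom T A P))"
proof -
  have "\<Xi> (\<Union>P\<in>{P\<in>Pow T. t \<in> P}. atom T A P) = (\<Sum>P\<in>{P\<in>Pow T. t \<in> P}. \<Xi> (atom T A P))"
    by (intro FAM_UN_disjoint) (auto simp: atom_disjoint assms)
  then show ?thesis using UN_atom_eq[OF assms(2), of A] by simp
qed

lemma sum_FAM_le_overlap:
  assumes T: "finite T" and K: "\<And>k. real (card {t\<in>T. k \<in> A t}) \<le> K"
  shows "(\<Sum>t\<in>T. \<Xi> (A t)) \<le> K"
proof -
  have "(\<Sum>t\<in>T. \<Xi> (A t)) = (\<Sum>t\<in>T. \<Sum>P\<in>Pow T. if t \<in> P then \<Xi> (atom T A P) else 0)"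
    using FAM_eq_sum_atom[OF T] by (intro sum.cong) (auto simp: sum.inter_filter[symmetric] T)
  also have "\<dots> = (\<Sum>P\<in>Pow T. \<Sum>t\<in>T. if t \<in> P then \<Xi> (atom T A P) else 0)"
    by (rule sum.swap)
  also have "\<dots> = (\<Sum>P\<in>Pow T. real (card P) * \<Xi> (atom T A P))"
    using T by (intro sum.cong refl) (simp add: sum.If_cases Int_absorb1)
  also have "\<dots> \<le> (\<Sum>P\<in>Pow T. K * \<Xi> (atom T A P))"
  proof (intro sum_mono)
    fix P assume P: "P \<in> Pow T"
    show "real (card P) * \<Xi> (atom T A P) \<le> K * \<Xi> (atom T A P)"
    proof (cases "atom T A P = {}")
      case True then show ?thesis by (simp add: FAM_empty)
    next
      case False
      then obtain k where "{t\<in>T. k \<in> A t} = P" unfolding atom_def by auto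
      then show ?thesis using K[of k] FAM_nonneg[of "atom T A P"] by (simp add: mult_right_mono)
    qed
  qed
  also have "\<dots> = K" using sum_FAM_atom[OF T] by (simp add: sum_distrib_left[symmetric])
  finally show ?thesis .
qed

lemma exists_subset_card_FAM:
  assumes "n = 0 \<or> \<Xi> A > 0"
  shows "\<exists>U. U \<subseteq> A - {..<k} \<and> finite U \<and> card U = n"
proof (cases "n = 0")
  case True
  then show ?thesis by (intro exI[of _ "{}"]) simp
next
  case False
  then have "\<Xi> A > 0" using assms by simp
  then have "infinite A" using FAM_finite[of A] by auto
  then have "infinite (A - {..<k})" by simp
  then show ?thesis using infinite_arbitrarily_large by blast
qed

text \<open>Scaling by N and rounding down, a family of disjoint sets is sampled by finite subsets
  beyond k, taken from the sets of positive measure (which are infinite).\<close>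

lemma exists_FAM_samples:
  fixes C :: "'i \<Rightarrow> nat set" and N :: nat
  assumes disj: "\<And>P P'. P \<noteq> P' \<Longrightarrow> C P \<inter> C P' = {}"
  shows "\<exists>U. (\<forall>P. U P \<subseteq> C P - {..<k}) \<and> (\<forall>S. finite S \<longrightarrow>
           \<bar>real (card (\<Union>P\<in>S. U P)) - real N * (\<Sum>P\<in>S. \<Xi> (C P))\<bar> \<le> real (card S))"
proof -
  define n where "n P = nat \<lfloor>real N * \<Xi> (C P)\<rfloor>" for P
  have "n P = 0 \<or> \<Xi> (C P) > 0" for P
    using FAM_nonneg[of "C P"] unfolding n_def by (cases "\<Xi> (C P) = 0") auto
  then have "\<forall>P. \<exists>U. U \<subseteq> C P - {..<k} \<and> finite U \<and> card U = n P"
    using exists_subset_card_FAM by blast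
  then obtain U where U: "\<And>P. U P \<subseteq> C P - {..<k}" "\<And>P. finite (U P)" "\<And>P. card (U P) = n P"
    by metis
  have "\<bar>real (card (\<Union>P\<in>S. U P)) - real N * (\<Sum>P\<in>S. \<Xi> (C P))\<bar> \<le> real (card S)"
    if S: "finite S" for S
  proof -
    have "U P \<inter> U P' = {}" if "P \<noteq> P'" for P P' using U(1)[of P] U(1)[of P'] disj[OF that] by blast
    then have "real (card (\<Union>P\<in>S. U P)) = (\<Sum>P\<in>S. real (n P))"
      using S by (simp add: card_UN_disjoint U(2,3))
    then show ?thesis
      using sum_nat_floor_bounds[OF S, of "\<lambda>P. \<Xi> (C P)" "real N"] FAM_nonneg
      unfolding n_def by (simp add: abs_le_iff)
  qed
  then show ?thesis using U(1) by blast
qed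

lemma FAM_sample:
  fixes X :: "nat \<Rightarrow> nat set"
  assumes eps: "\<epsilon> > 0"
  shows "\<exists>u. finite u \<and> u \<noteq> {} \<and> u \<inter> {..<k} = {} \<and>
            (\<forall>i<p. \<bar>real (card (u \<inter> X i)) / real (card u) - \<Xi> (X i)\<bar> < \<epsilon>)"
proof -
  define T where "T = {..<p}"
  define R where "R = real (card (Pow T))"
  have fT: "finite T" unfolding T_def by simp
  obtain N :: nat where N: "2 * R / \<epsilon> + R < real N" using reals_Archimedean2 by blast
  obtain U where U: "\<And>P. U P \<subseteq> atom T X P - {..<k}" and count: "\<And>S. finite S \<Longrightarrow>
      \<bar>real (card (\<Union>P\<in>S. U P)) - real N * (\<Sum>P\<in>S. \<Xi> (atom T X P))\<bar> \<le> real (card S)"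
    using exists_FAM_samples[of "atom T X" k N, OF atom_disjoint] by blast
  have count_R: "\<bar>real (card (\<Union>P\<in>S. U P)) - real N * (\<Sum>P\<in>S. \<Xi> (atom T X P))\<bar> \<le> R"
    if "S \<subseteq> Pow T" for S
    using count[of S] card_mono[OF _ that] fT finite_subset[OF that] unfolding R_def by force
  define u where "u = (\<Union>P\<in>Pow T. U P)"
  have u_total: "\<bar>real N - real (card u)\<bar> \<le> R"
    using count_R[of "Pow T"] sum_FAM_atom[OF fT, of X] unfolding u_def by simp
  have u_X: "u \<inter> X i = (\<Union>P\<in>{P\<in>Pow T. i \<in> P}. U P)" if "i \<in> T" for i
    using U mem_atom_iff[of _ T X _ i] that unfolding u_def by blast
  have "0 \<le> 2 * R / \<epsilon>" using eps unfolding R_def by simp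
  then have "0 < real (card u)" using u_total N by linarith
  then have "finite u" "u \<noteq> {}" by (auto intro: card_ge_0_finite)
  moreover have "u \<inter> {..<k} = {}" using U unfolding u_def by blast
  moreover have "\<bar>real (card (u \<inter> X i)) / real (card u) - \<Xi> (X i)\<bar> < \<epsilon>" if "i < p" for i
  proof (rule ratio_approx[OF _ u_total FAM_nonneg FAM_le_1 eps])
    have "i \<in> T" using that unfolding T_def by simp
    then show "\<bar>real (card (u \<inter> X i)) - real N * \<Xi> (X i)\<bar> \<le> R"
      using count_R[of "{P\<in>Pow T. i \<in> P}"] FAM_eq_sum_atom[OF fT, of i X]
      unfolding u_X[OF \<open>i \<in> T\<close>] by auto
    show "2 * R / \<epsilon> < real N - R" using N by linarith
  qed
  ultimately show ?thesis by blast
qed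

end

section \<open>The limit of an (s, l)-sequence\<close>

definition slack :: "nat \<Rightarrow> nat \<Rightarrow> real" where
  "slack h0 h = (\<Sum>i\<in>{h0..<h}. 1 / real (piT i))"

definition freq :: "(nat \<Rightarrow> nat set) \<Rightarrow> (nat \<Rightarrow> nat list set) \<Rightarrow> nat list \<Rightarrow> nat \<Rightarrow> real" where
  "freq I Q t k = real (card {n \<in> I k. t \<in> Q n}) / real (card (I k))"

lemma sum_geometric_le:
  fixes c :: real
  assumes "c \<ge> 0"
  shows "(\<Sum>i\<in>{h0..<h}. c / 2^(i+1)) \<le> c / 2^h0"
proof -
  have sum: "(\<Sum>i\<in>{h0..<h0+d}. c / 2^(i+1)) = c / 2^h0 - c / 2^(h0+d)" for d
  proof (induction d)
    case (Suc d)
    have "c / 2^h0 - c / 2^(h0+d) + c / 2^(h0+d+1) = c / 2^h0 - c / 2^(h0 + Suc d)"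
      by (simp add: field_simps)
    then show ?case using Suc by simp
  qed simp
  then show ?thesis
  proof (cases "h0 \<le> h")
    case True
    then obtain d where "h = h0 + d" using le_Suc_ex by blast
    then show ?thesis using sum assms by simp
  qed (use assms in simp)
qed

lemma slack_nonneg: "0 \<le> slack h0 h"
  unfolding slack_def by (simp add: sum_nonneg)

lemma slack_Suc: "h0 \<le> h \<Longrightarrow> slack h0 (Suc h) = slack h0 h + 1 / real (piT h)"
  unfolding slack_def by simp

lemma slack_le: "slack h0 h \<le> 1 / 2^h0"
proof -
  have "1 / real (piT i) \<le> 1 / 2^(i+1)" for i
  proof -
    have "real (2^(i+1)) \<le> real (piT i)" using piT_ge_two_power[of i] by linarith
    then show ?thesis by (simp add: frac_le)
  qed
  then have "slack h0 h \<le> (\<Sum>i\<in>{h0..<h}. 1 / 2^(i+1))"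
    unfolding slack_def by (intro sum_mono)
  then show ?thesis using sum_geometric_le[of 1 h0 h] by simp
qed

lemma slack_le_inverse:
  assumes "3 * m < h0" "1 \<le> m"
  shows "slack h0 h \<le> 1 / (2 * real m)"
proof -
  have "2 * m \<le> 2 ^ h0" using less_exp[of h0] assms by linarith
  then have "2 * real m \<le> 2 ^ h0" by (metis of_nat_le_iff of_nat_mult of_nat_numeral of_nat_power)
  then have "1 / (2::real)^h0 \<le> 1 / (2 * real m)" using assms by (simp add: frac_le)
  then show ?thesis using slack_le[of h0 h] by linarith
qed

lemma aT_powr_mul_piT_square_le:
  assumes m: "m \<ge> 2" and h0: "3 * m < h0" and h: "h0 \<le> h"
  shows "real (aT h) powr (1 - 1/real m) * real (piT h)^2 \<le> real (aT h) powr (1 - 1/real h0)"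
proof -
  let ?p = "real (piT h)"
  have p2: "?p \<ge> 2" using piT_ge_two[of h] by simp
  have "1 / real h0 \<le> 1 / (3 * real m)" using h0 m by (simp add: frac_le)
  moreover have "1 / real m - 1 / (3 * real m) = 2 / (3 * real m)" using m by (simp add: field_simps)
  ultimately have d: "2 / (3 * real m) \<le> 1 / real m - 1 / real h0" by linarith
  have "2 = (3 * real m) * (2 / (3 * real m))" using m by simp
  also have "\<dots> \<le> real (h+2) * (2 / (3 * real m))" using h0 h by (intro mult_right_mono) auto
  also have "\<dots> \<le> real (h+2) * (1 / real m - 1 / real h0)" using d by (intro mult_left_mono) auto
  finally have e: "2 + real (h+2) * (1 - 1/real m) \<le> real (h+2) * (1 - 1/real h0)"
    by (simp add: algebra_simps)
  have "real (aT h) powr (1 - 1/real m) * ?p^2 = ?p powr (2 + real (h+2) * (1 - 1/real m))"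
    using p2 by (simp add: aT_powr powr_add powr_numeral)
  also have "\<dots> \<le> ?p powr (real (h+2) * (1 - 1/real h0))"
    using e p2 by (intro powr_mono) auto
  finally show ?thesis by (simp add: aT_powr)
qed

lemma freq_nonneg: "0 \<le> freq I Q t k"
  unfolding freq_def by simp

lemma freq_antimono:
  assumes "finite (I k)" "\<And>n. subtree (Q n)" "prefix y z"
  shows "freq I Q z k \<le> freq I Q y k"
proof -
  have "{n \<in> I k. z \<in> Q n} \<subseteq> {n \<in> I k. y \<in> Q n}"
    using subtree_prefix_closed[OF assms(2) _ assms(3)] by blast
  then have "card {n \<in> I k. z \<in> Q n} \<le> card {n \<in> I k. y \<in> Q n}"
    using assms(1) by (intro card_mono) auto
  then show ?thesis unfolding freq_def by (intro divide_right_mono) auto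
qed

lemma real_card_filter_eq_sum:
  "finite A \<Longrightarrow> real (card {x\<in>A. P x}) = (\<Sum>x\<in>A. if P x then 1 else 0)"
  by (simp add: sum.inter_filter[symmetric])

text \<open>Double counting: a successor y of t is missed by Q n only if Q n contains t, and each
  such Q n misses at most c successors.\<close>

lemma sum_freq_drop_le:
  assumes I: "finite (I k)" "card (I k) > 0" and Q: "\<And>n. subtree (Q n)"
    and miss: "\<And>n. n \<in> I k \<Longrightarrow> t \<in> Q n \<Longrightarrow> real (card (Omega t - Q n)) \<le> c" and "c \<ge> 0"
  shows "(\<Sum>y\<in>Omega t. freq I Q t k - freq I Q y k) \<le> c"
proof -
  let ?F = "I k"
  let ?P = "\<lambda>n y. t \<in> Q n \<and> y \<notin> Q n"
  have drop: "freq I Q t k - freq I Q y k = real (card {n\<in>?F. ?P n y}) / real (card ?F)"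
    if "y \<in> Omega t" for y
  proof -
    have "y \<in> Q n \<Longrightarrow> t \<in> Q n" for n
      using that Q subtree_prefix_closed Omega_prefix by blast
    then have "{n\<in>?F. t \<in> Q n} = {n\<in>?F. y \<in> Q n} \<union> {n\<in>?F. ?P n y}" by blast
    then have "card {n\<in>?F. t \<in> Q n} = card {n\<in>?F. y \<in> Q n} + card {n\<in>?F. ?P n y}"
      using I(1) by (simp add: card_Un_disjoint[symmetric] disjoint_iff)
    then show ?thesis unfolding freq_def by (simp add: diff_divide_distrib[symmetric])
  qed
  have "(\<Sum>y\<in>Omega t. real (card {n\<in>?F. ?P n y}))
      = (\<Sum>y\<in>Omega t. \<Sum>n\<in>?F. if ?P n y then 1 else 0)"
    using I(1) by (simp add: real_card_filter_eq_sum)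
  also have "\<dots> = (\<Sum>n\<in>?F. \<Sum>y\<in>Omega t. if ?P n y then 1 else 0)"
    by (rule sum.swap)
  also have "\<dots> = (\<Sum>n\<in>?F. real (card {y\<in>Omega t. ?P n y}))"
    by (simp add: real_card_filter_eq_sum)
  also have "\<dots> \<le> (\<Sum>n\<in>?F. c)"
  proof (intro sum_mono)
    fix n assume "n \<in> ?F"
    then show "real (card {y\<in>Omega t. ?P n y}) \<le> c"
      using miss[of n] \<open>c \<ge> 0\<close> by (cases "t \<in> Q n") (auto simp: set_diff_eq)
  qed
  finally have "(\<Sum>y\<in>Omega t. real (card {n\<in>?F. ?P n y})) / real (card ?F) \<le> c"
    using I(2) by (simp add: divide_le_eq mult.commute)
  then show ?thesis by (simp add: drop sum_divide_distrib)
qed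

lemma card_freq_drop_le:
  assumes I: "finite (I k)" "card (I k) > 0" and Q: "\<And>n. subtree (Q n)"
    and miss: "\<And>n. n \<in> I k \<Longrightarrow> t \<in> Q n \<Longrightarrow> real (card (Omega t - Q n)) \<le> c" and "c \<ge> 0"
    and "\<delta> > 0"
  shows "real (card {y\<in>Omega t. freq I Q y k + \<delta> \<le> freq I Q t k}) \<le> c / \<delta>"
proof -
  let ?Y = "{y\<in>Omega t. freq I Q y k + \<delta> \<le> freq I Q t k}"
  have "real (card ?Y) * \<delta> = (\<Sum>y\<in>?Y. \<delta>)" by simp
  also have "\<dots> \<le> (\<Sum>y\<in>?Y. freq I Q t k - freq I Q y k)" by (intro sum_mono) auto
  also have "\<dots> \<le> (\<Sum>y\<in>Omega t. freq I Q t k - freq I Q y k)"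
    using freq_antimono[of I k Q, OF I(1) Q] Omega_prefix by (intro sum_mono2) auto
  also have "\<dots> \<le> c" by (rule sum_freq_drop_le[of I k Q t c, OF assms(1-5)])
  finally show ?thesis using \<open>\<delta> > 0\<close> by (simp add: pos_le_divide_eq)
qed

definition heavy ::
  "(nat \<Rightarrow> nat set) \<Rightarrow> (nat set \<Rightarrow> real) \<Rightarrow> (nat \<Rightarrow> nat list set) \<Rightarrow> nat \<Rightarrow> nat list \<Rightarrow> bool" where
  "heavy I \<Xi> Q h0 t \<longleftrightarrow> 1 - slack h0 (length t) \<le> \<Xi> {k. 1 - slack h0 (length t) \<le> freq I Q t k}"

definition lim_tree ::
  "(nat \<Rightarrow> nat set) \<Rightarrow> (nat set \<Rightarrow> real) \<Rightarrow> (nat \<Rightarrow> nat list set) \<Rightarrow> nat list set" where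
  "lim_tree I \<Xi> Q = (let s = stem (Q 0) in {t \<in> Tstar. prefix t s \<or>
     (prefix s t \<and> (\<forall>t0. prefix s t0 \<and> prefix t0 t \<longrightarrow> heavy I \<Xi> Q (length s) t0))})"

text \<open>On sequences that are not (s, l)-sequences the value of the limit is irrelevant.\<close>

definition FAM_lim ::
  "(nat \<Rightarrow> nat set) \<Rightarrow> (nat set \<Rightarrow> real) \<Rightarrow> (nat \<Rightarrow> nat list set) \<Rightarrow> nat list set" where
  "FAM_lim I \<Xi> Q = (if \<exists>s l. sl_sequence s l Q then lim_tree I \<Xi> Q else Q 0)"

context
  fixes I :: "nat \<Rightarrow> nat set" and \<Xi> :: "nat set \<Rightarrow> real" and Q :: "nat \<Rightarrow> nat list set"
    and s :: "nat list" and l :: real and m :: nat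
  assumes FAM: "FAM \<Xi>" and I: "\<And>k. finite (I k)" "\<And>k. 0 < card (I k)"
    and sl: "sl_sequence s l Q" and m: "2 \<le> m" "3 * m < length s" "l = 1 / real m"
begin

lemma lim_tree_eq: "lim_tree I \<Xi> Q = {t \<in> Tstar. prefix t s \<or>
     (prefix s t \<and> (\<forall>t0. prefix s t0 \<and> prefix t0 t \<longrightarrow> heavy I \<Xi> Q (length s) t0))}"
  using sl unfolding lim_tree_def sl_sequence_def by simp

lemma heavy_stem: "heavy I \<Xi> Q (length s) s"
proof -
  have "{n \<in> I k. s \<in> Q n} = I k" for k using sl_sequence_stem[OF sl] by auto
  then have "freq I Q s k = 1" for k unfolding freq_def using I(2)[of k] by simp
  then show ?thesis unfolding heavy_def slack_def using FAM_UNIV[OF FAM] by simp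
qed

lemma heavy_lim_tree:
  assumes "x \<in> lim_tree I \<Xi> Q" "prefix s t" "prefix t x"
  shows "heavy I \<Xi> Q (length s) t"
proof (cases "prefix x s")
  case True
  then have "t = s"
    using assms(2,3) prefix_order.trans prefix_order.antisym by blast
  then show ?thesis using heavy_stem by simp
next
  case False
  then show ?thesis using assms unfolding lim_tree_eq by auto
qed

lemma s_mem_Tstar: "s \<in> Tstar"
  using sl_sequence_stem[OF sl, of 0] unfolding subtree_def by auto

lemma subtree_lim_tree: "subtree (lim_tree I \<Xi> Q)"
  unfolding subtree_def
proof (intro conjI allI impI)
  show "lim_tree I \<Xi> Q \<subseteq> Tstar" unfolding lim_tree_eq by auto
  show "lim_tree I \<Xi> Q \<noteq> {}" using s_mem_Tstar unfolding lim_tree_eq by auto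
next
  fix y u assume yu: "y @ u \<in> lim_tree I \<Xi> Q"
  have y: "prefix y (y @ u)" by simp
  then have "y \<in> Tstar" using yu Tstar_prefix_closed unfolding lim_tree_eq by blast
  moreover have "prefix y s \<or> prefix s y"
    using yu y prefix_same_cases prefix_order.trans unfolding lim_tree_eq by blast
  moreover have "heavy I \<Xi> Q (length s) t0" if "prefix s t0" "prefix t0 y" for t0
    using heavy_lim_tree[OF yu that(1)] that(2) y prefix_order.trans by blast
  ultimately show "y \<in> lim_tree I \<Xi> Q" unfolding lim_tree_eq by blast
qed

text \<open>A successor y of x leaves the limit because the set of k where y is frequent has
  measure below the threshold; since x is heavy, y must lose frequency on a set of positive
  measure.\<close>

lemma FAM_freq_drop_gt:
  assumes x: "x \<in> lim_tree I \<Xi> Q" "prefix s x" and y: "y \<in> Omega x - lim_tree I \<Xi> Q"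
  defines "D \<equiv> slack (length s) (length x)" and "\<delta> \<equiv> 1 / real (piT (length x))"
  shows "\<delta> < \<Xi> {k. 1 - D \<le> freq I Q x k \<and> freq I Q y k < 1 - D - \<delta>}"
proof -
  have y_Omega: "y \<in> Omega x" and y_notin: "y \<notin> lim_tree I \<Xi> Q" using y by auto
  have "y \<in> Tstar" using x(1) y_Omega Omega_subset_Tstar unfolding lim_tree_eq by blast
  have xy: "prefix x y" "length y = Suc (length x)" using Omega_prefix[OF y_Omega] by auto
  then have "prefix s y" "\<not> prefix y s" using x(2) prefix_length_le[of y s] prefix_length_le[of s x]
    by (auto intro: prefix_order.trans)
  then obtain t0 where t0: "prefix s t0" "prefix t0 y" "\<not> heavy I \<Xi> Q (length s) t0"
    using y_notin \<open>y \<in> Tstar\<close> unfolding lim_tree_eq by blast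
  obtain a where "y = x @ [a]" using y_Omega unfolding Omega_def by blast
  then have "t0 = y \<or> prefix t0 x" using t0(2) by simp
  then have "t0 = y" using t0(3) heavy_lim_tree[OF x(1) t0(1)] by blast
  then have not_heavy: "\<Xi> {k. 1 - (D + \<delta>) \<le> freq I Q y k} < 1 - (D + \<delta>)"
    using t0(3) xy(2) slack_Suc[OF prefix_length_le[OF x(2)]]
    unfolding heavy_def D_def \<delta>_def by simp
  have x_heavy: "1 - D \<le> \<Xi> {k. 1 - D \<le> freq I Q x k}"
    using heavy_lim_tree[OF x(1) x(2) prefix_order.refl] unfolding heavy_def D_def .
  have "{k. 1 - D \<le> freq I Q x k} - {k. 1 - D \<le> freq I Q x k \<and> freq I Q y k < 1 - D - \<delta>}
      \<subseteq> {k. 1 - (D + \<delta>) \<le> freq I Q y k}" by auto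
  then show ?thesis using FAM_Diff_ge[OF FAM] FAM_mono[OF FAM] not_heavy x_heavy
    by (smt (verit))
qed

lemma card_missing_lim_tree:
  assumes x: "x \<in> lim_tree I \<Xi> Q" "prefix s x"
  shows "real (card (Omega x - lim_tree I \<Xi> Q)) \<le> real (aT (length x)) powr (1 - 1/real (length s))"
proof -
  define D where "D = slack (length s) (length x)"
  define \<delta> where "\<delta> = 1 / real (piT (length x))"
  define c where "c = real (aT (length x)) powr (1 - 1/real m)"
  define Bad where "Bad = Omega x - lim_tree I \<Xi> Q"
  define bad where "bad y = {k. 1 - D \<le> freq I Q x k \<and> freq I Q y k < 1 - D - \<delta>}" for y
  have \<delta>: "\<delta> > 0" unfolding \<delta>_def using piT_ge_two[of "length x"] by simp
  have overlap: "real (card {y\<in>Bad. k \<in> bad y}) \<le> c / \<delta>" for k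
  proof -
    have "{y\<in>Bad. k \<in> bad y} \<subseteq> {y\<in>Omega x. freq I Q y k + \<delta> \<le> freq I Q x k}"
      unfolding Bad_def bad_def by auto
    then have "card {y\<in>Bad. k \<in> bad y} \<le> card {y\<in>Omega x. freq I Q y k + \<delta> \<le> freq I Q x k}"
      by (intro card_mono) auto
    also have "real \<dots> \<le> c / \<delta>"
    proof (rule card_freq_drop_le[OF I sl_sequence_stem(1)[OF sl] _ _ \<delta>])
      show "real (card (Omega x - Q n)) \<le> c" if "x \<in> Q n" for n
        using sl_sequence_card_missing_le[OF sl m(3) that] prefix_length_le[OF x(2)]
        unfolding c_def by blast
    qed (simp add: c_def)
    finally show ?thesis by simp
  qed
  have "real (card Bad) * \<delta> = (\<Sum>y\<in>Bad. \<delta>)" by simp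
  also have "\<dots> \<le> (\<Sum>y\<in>Bad. \<Xi> (bad y))"
    using FAM_freq_drop_gt[OF x] unfolding Bad_def bad_def D_def \<delta>_def
    by (intro sum_mono less_imp_le) blast
  also have "\<dots> \<le> c / \<delta>"
    using sum_FAM_le_overlap[OF FAM, of Bad bad] overlap unfolding Bad_def by simp
  finally have "real (card Bad) \<le> c * real (piT (length x))^2"
    using \<delta> unfolding \<delta>_def by (simp add: field_simps power2_eq_square)
  also have "\<dots> \<le> real (aT (length x)) powr (1 - 1/real (length s))"
    unfolding c_def using aT_powr_mul_piT_square_le[OF m(1,2) prefix_length_le[OF x(2)]] .
  finally show ?thesis unfolding Bad_def .
qed

lemma in_E_lim_tree: "in_E (lim_tree I \<Xi> Q)" "stem (lim_tree I \<Xi> Q) = s"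
proof -
  have "s \<in> lim_tree I \<Xi> Q" "\<forall>x\<in>lim_tree I \<Xi> Q. prefix x s \<or> prefix s x"
    unfolding lim_tree_eq using s_mem_Tstar by auto
  moreover have "length s > 0" using m by linarith
  ultimately show "in_E (lim_tree I \<Xi> Q)" "stem (lim_tree I \<Xi> Q) = s"
    using in_E_intro[OF subtree_lim_tree] card_missing_lim_tree by auto
qed

end

lemma sl_sequence_lim_tree:
  assumes "FAM \<Xi>" "\<And>k. finite (I k)" "\<And>k. 0 < card (I k)" and sl: "sl_sequence s l Q"
  shows "in_E (lim_tree I \<Xi> Q)" "stem (lim_tree I \<Xi> Q) = s"
    and "x \<in> lim_tree I \<Xi> Q \<Longrightarrow> prefix s t \<Longrightarrow> prefix t x \<Longrightarrow> heavy I \<Xi> Q (length s) t"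
proof -
  obtain m where m: "2 \<le> m" "3 * m < length s" "l = 1 / real m"
    using sl_sequence_loss[OF sl] by blast
  show "in_E (lim_tree I \<Xi> Q)" "stem (lim_tree I \<Xi> Q) = s"
    using in_E_lim_tree[where I = I and m = m, OF assms m] by auto
  show "x \<in> lim_tree I \<Xi> Q \<Longrightarrow> prefix s t \<Longrightarrow> prefix t x \<Longrightarrow> heavy I \<Xi> Q (length s) t"
    using heavy_lim_tree[where I = I and m = m, OF assms m] by blast
qed

lemma lim_tree_comparable:
  "sl_sequence s l Q \<Longrightarrow> x \<in> lim_tree I \<Xi> Q \<Longrightarrow> prefix x s \<or> prefix s x"
  unfolding lim_tree_def sl_sequence_def by auto

lemma in_E_FAM_lim:
  assumes "FAM \<Xi>" "\<And>k. finite (I k)" "\<And>k. 0 < card (I k)" "\<forall>n. in_E (Q n)"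
  shows "in_E (FAM_lim I \<Xi> Q)"
  using assms sl_sequence_lim_tree(1)[OF assms(1-3)] unfolding FAM_lim_def by auto

section \<open>Strong FAM limits\<close>

lemma exists_descendant:
  fixes G :: "nat list \<Rightarrow> real" and b :: "nat \<Rightarrow> real"
  assumes t: "t \<in> q"
    and step: "\<And>y. y \<in> q \<Longrightarrow> prefix t y \<Longrightarrow> \<exists>y'\<in>q \<inter> Omega y. G y - G y' \<le> b (length y)"
  shows "\<exists>t'\<in>q. prefix t t' \<and> length t' = length t + d \<and>
           G t - G t' \<le> (\<Sum>i\<in>{length t..<length t + d}. b i)"
proof (induction d)
  case 0 then show ?case using t by auto
next
  case (Suc d)
  then obtain y where y: "y \<in> q" "prefix t y" "length y = length t + d"
      "G t - G y \<le> (\<Sum>i\<in>{length t..<length t + d}. b i)" by auto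
  obtain y' where y': "y' \<in> q \<inter> Omega y" "G y - G y' \<le> b (length y)" using step[OF y(1,2)] by auto
  then have "prefix t y'" "length y' = length t + Suc d"
    using Omega_prefix[of y' y] y prefix_order.trans by auto
  then show ?case using y y' by (intro bexI[of _ y']) auto
qed

lemma in_E_exists_node_at_height:
  assumes q: "in_E q" and h: "length (stem q) \<le> h"
  shows "\<exists>t\<in>q. prefix (stem q) t \<and> length t = h"
proof -
  have "\<exists>y'\<in>q \<inter> Omega y. (0::real) - 0 \<le> 0" if "y \<in> q" "prefix (stem q) y" for y
    using in_E_has_successor[OF q that] by auto
  then show ?thesis
    using exists_descendant[OF in_E_stem_mem[OF q], of "\<lambda>_. 0" "\<lambda>_. 0" "h - length (stem q)"] h
    by auto
qed

definition thin :: "nat list set \<Rightarrow> nat list \<Rightarrow> nat list set set \<Rightarrow> nat list set" where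
  "thin q t Ps = {x. prefix x t} \<union> {x\<in>q. prefix t x \<and> (\<forall>p\<in>Ps. x \<in> p)}"

lemma thin_subset:
  assumes "subtree q" "t \<in> q"
  shows "thin q t Ps \<subseteq> q"
  using subtree_prefix_closed[OF assms] unfolding thin_def by blast

lemma thin_subset_member:
  assumes "p \<in> Ps" "subtree p" "t \<in> p"
  shows "thin q t Ps \<subseteq> p"
  using subtree_prefix_closed[OF assms(2,3)] assms(1) unfolding thin_def by blast

lemma subtree_thin:
  assumes q: "subtree q" "t \<in> q" and Ps: "\<And>p. p \<in> Ps \<Longrightarrow> subtree p"
  shows "subtree (thin q t Ps)"
  unfolding subtree_def
proof (intro conjI allI impI)
  show "thin q t Ps \<subseteq> Tstar" using thin_subset[OF q] q(1) unfolding subtree_def by blast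
  show "thin q t Ps \<noteq> {}" unfolding thin_def by blast
next
  fix y v assume yv: "y @ v \<in> thin q t Ps"
  have y: "prefix y (y @ v)" by simp
  show "y \<in> thin q t Ps"
  proof (cases "prefix y t")
    case False
    then have "\<not> prefix (y @ v) t" using y prefix_order.trans by blast
    then have yv': "y @ v \<in> q" "prefix t (y @ v)" "\<forall>p\<in>Ps. y @ v \<in> p"
      using yv unfolding thin_def by auto
    then have ty: "prefix t y" using y False prefix_same_cases by blast
    have "y @ v \<in> q" "\<forall>p\<in>Ps. y @ v \<in> p" using yv' by auto
    then have "y \<in> q" "\<forall>p\<in>Ps. y \<in> p"
      using subtree_prefix_closed[OF q(1) _ y] subtree_prefix_closed[OF Ps _ y] by auto
    then show ?thesis using ty unfolding thin_def by blast
  qed (simp add: thin_def)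
qed

lemma card_missing_thin_le:
  assumes "finite Ps" "prefix t x" "length t \<le> length x"
  shows "card (Omega x - thin q t Ps) \<le> card (Omega x - q) + (\<Sum>p\<in>Ps. card (Omega x - p))"
proof -
  have "Omega x - thin q t Ps \<subseteq> (Omega x - q) \<union> (\<Union>p\<in>Ps. Omega x - p)"
  proof
    fix y assume y: "y \<in> Omega x - thin q t Ps"
    then have "prefix t y" "\<not> prefix y t"
      using Omega_prefix[of y x] assms(2,3) prefix_order.trans prefix_length_le by fastforce+
    then show "y \<in> (Omega x - q) \<union> (\<Union>p\<in>Ps. Omega x - p)" using y unfolding thin_def by blast
  qed
  then have "card (Omega x - thin q t Ps) \<le> card ((Omega x - q) \<union> (\<Union>p\<in>Ps. Omega x - p))"
    using assms(1) by (intro card_mono) auto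
  also have "\<dots> \<le> card (Omega x - q) + card (\<Union>p\<in>Ps. Omega x - p)" by (rule card_Un_le)
  also have "\<dots> \<le> card (Omega x - q) + (\<Sum>p\<in>Ps. card (Omega x - p))"
    using card_UN_le[OF assms(1), of "\<lambda>p. Omega x - p"] by (rule add_left_mono)
  finally show ?thesis .
qed

lemma two_div_le_inverse:
  assumes "0 < k" "2 * k \<le> H"
  shows "2 / real H \<le> 1 / real k"
proof -
  have "2 / real H \<le> 2 / (2 * real k)" using assms by (intro divide_left_mono) auto
  then show ?thesis by simp
qed

text \<open>The union bound: a node of height at least H with at most H + 1 thinning sets, each missing
  at most a^(1 - 2/H) of its successors, misses at most (H + 1) a^(1 - 2/H) \<le> a^(1 - 1/H) of
  them, because a^(1/H) \<ge> \<pi> exceeds the height.\<close>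

lemma card_missing_thin_le_powr:
  assumes Ps: "finite Ps" "card Ps \<le> length t" and x: "prefix t x" and H: "0 < length t"
    and b: "b = real (aT (length x)) powr (1 - 2 / real (length t))"
    and q: "real (card (Omega x - q)) \<le> b" and p: "\<And>p. p \<in> Ps \<Longrightarrow> real (card (Omega x - p)) \<le> b"
  shows "real (card (Omega x - thin q t Ps)) \<le> real (aT (length x)) powr (1 - 1 / real (length t))"
proof -
  let ?a = "real (aT (length x))"
  have Hx: "length t \<le> length x" using prefix_length_le[OF x] .
  have "real (card (Omega x - thin q t Ps))
      \<le> real (card (Omega x - q)) + (\<Sum>p\<in>Ps. real (card (Omega x - p)))"
    using card_missing_thin_le[OF Ps(1) x Hx, of q] by (metis of_nat_add of_nat_le_iff of_nat_sum)
  also have "\<dots> \<le> b + (\<Sum>p\<in>Ps. b)" using q p by (intro add_mono sum_mono)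
  also have "\<dots> = (1 + real (card Ps)) * b" by (simp add: algebra_simps)
  also have "\<dots> \<le> ?a powr (1 / real (length t)) * b"
  proof (rule mult_right_mono)
    have "length x + 2 \<le> piT (length x)"
      using piT_ge_two_power[of "length x"] less_exp[of "length x + 1"] by simp
    then show "1 + real (card Ps) \<le> ?a powr (1 / real (length t))"
      using piT_le_aT_root[of "length t" "length x"] H Hx Ps(2) by simp
  qed (simp add: b)
  also have "\<dots> = ?a powr (1 - 1 / real (length t))"
    unfolding b by (simp add: powr_add[symmetric] diff_divide_distrib)
  finally show ?thesis .
qed

lemma in_E_thin:
  assumes q: "in_E q" and t: "t \<in> q" "prefix (stem q) t"
    and H: "2 * length (stem q) \<le> length t" "2 * m \<le> length t" "1 \<le> m"
    and Ps: "finite Ps" "card Ps \<le> length t"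
      "\<And>p. p \<in> Ps \<Longrightarrow> subtree p \<and> t \<in> p \<and>
        (\<forall>x\<in>p. prefix t x \<longrightarrow> real (card (Omega x - p)) \<le> real (aT (length x)) powr (1 - 1/real m))"
  shows "in_E (thin q t Ps)" "thin q t Ps \<subseteq> q" "\<And>p. p \<in> Ps \<Longrightarrow> thin q t Ps \<subseteq> p"
proof -
  have subtree_q: "subtree q" by (rule in_E_subtree[OF q])
  show "thin q t Ps \<subseteq> q" by (rule thin_subset[OF subtree_q t(1)])
  show "\<And>p. p \<in> Ps \<Longrightarrow> thin q t Ps \<subseteq> p" using thin_subset_member Ps(3) by blast
  have H0: "0 < length t" using H by linarith
  have norm: "real (card (Omega x - thin q t Ps)) \<le> real (aT (length x)) powr (1 - 1/real (length t))"
    if x: "x \<in> thin q t Ps" "prefix t x" for x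
  proof (rule card_missing_thin_le_powr[OF Ps(1,2) x(2) H0 refl])
    let ?b = "real (aT (length x)) powr (1 - 2 / real (length t))"
    have "x = t \<or> (x \<in> q \<and> (\<forall>p\<in>Ps. x \<in> p))"
      using x prefix_order.antisym unfolding thin_def by blast
    then have xq: "x \<in> q" and xP: "\<And>p. p \<in> Ps \<Longrightarrow> x \<in> p" using t(1) Ps(3) by auto
    have "length (stem q) = 0 \<or> 1 - 1 / real (length (stem q)) \<le> 1 - 2 / real (length t)"
      using two_div_le_inverse[of "length (stem q)"] H by auto
    then show "real (card (Omega x - q)) \<le> ?b"
      by (intro in_E_card_missing_le[OF q xq prefix_order.trans[OF t(2) x(2)]]) auto
    fix p assume p: "p \<in> Ps"
    have "real (card (Omega x - p)) \<le> real (aT (length x)) powr (1 - 1/real m)"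
      using Ps(3)[OF p] xP[OF p] x(2) by blast
    also have "\<dots> \<le> ?b"
      using two_div_le_inverse[of m] H aT_ge_two[of "length x"] by (intro powr_mono) auto
    finally show "real (card (Omega x - p)) \<le> ?b" .
  qed
  have "\<forall>x\<in>thin q t Ps. prefix x t \<or> prefix t x" unfolding thin_def by blast
  then show "in_E (thin q t Ps)"
    using in_E_intro(1)[OF subtree_thin[OF subtree_q t(1)] _ H0] norm Ps(3)
    unfolding thin_def by blast
qed

definition avg_freq :: "(nat \<Rightarrow> nat set) \<Rightarrow> (nat \<Rightarrow> nat list set) \<Rightarrow> nat set \<Rightarrow> nat list \<Rightarrow> real" where
  "avg_freq I Q u t = (1 / real (card u)) * (\<Sum>k\<in>u. freq I Q t k)"

definition total_avg_freq ::
  "(nat \<Rightarrow> nat set) \<Rightarrow> (nat \<Rightarrow> nat \<Rightarrow> nat list set) \<Rightarrow> nat \<Rightarrow> nat set \<Rightarrow> nat list \<Rightarrow> real" where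
  "total_avg_freq I qs J u t = (\<Sum>j<J. avg_freq I (qs j) u t)"

lemma avg_freq_antimono:
  assumes "\<And>k. finite (I k)" "\<And>n. subtree (Q n)" "prefix y z"
  shows "avg_freq I Q u z \<le> avg_freq I Q u y"
  unfolding avg_freq_def using freq_antimono[OF assms(1) assms(2-3)]
  by (intro mult_left_mono sum_mono) auto

lemma total_avg_freq_antimono:
  assumes "\<And>k. finite (I k)" "\<And>j n. j < J \<Longrightarrow> subtree (qs j n)" "prefix y z"
  shows "total_avg_freq I qs J u z \<le> total_avg_freq I qs J u y"
  unfolding total_avg_freq_def using avg_freq_antimono[OF assms(1) assms(2) assms(3)]
  by (intro sum_mono) auto

lemma sum_total_avg_freq_drop_le:
  assumes I: "\<And>k. finite (I k)" "\<And>k. 0 < card (I k)" and Q: "\<And>j n. j < J \<Longrightarrow> subtree (qs j n)"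
    and miss: "\<And>j n. j < J \<Longrightarrow> y \<in> qs j n \<Longrightarrow> real (card (Omega y - qs j n)) \<le> c"
    and c: "0 \<le> c"
  shows "(\<Sum>y'\<in>Omega y. total_avg_freq I qs J u y - total_avg_freq I qs J u y') \<le> real J * c"
proof -
  let ?d = "\<lambda>j y' k. freq I (qs j) y k - freq I (qs j) y' k"
  have "(\<Sum>y'\<in>Omega y. total_avg_freq I qs J u y - total_avg_freq I qs J u y')
      = (\<Sum>y'\<in>Omega y. \<Sum>j<J. 1 / real (card u) * (\<Sum>k\<in>u. ?d j y' k))"
    unfolding total_avg_freq_def avg_freq_def
    by (simp add: sum_subtractf right_diff_distrib)
  also have "\<dots> = (\<Sum>j<J. 1 / real (card u) * (\<Sum>k\<in>u. \<Sum>y'\<in>Omega y. ?d j y' k))"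
    by (subst sum.swap) (simp add: sum_distrib_left sum.swap[of _ u])
  also have "\<dots> \<le> (\<Sum>j<J. 1 / real (card u) * (\<Sum>k\<in>u. c))"
    using sum_freq_drop_le[OF I(1,2) Q miss c] by (intro sum_mono mult_left_mono) auto
  also have "\<dots> \<le> (\<Sum>j<J. c)"
    using c by (intro sum_mono) (simp add: divide_le_eq_1)
  finally show ?thesis by simp
qed

lemma exists_le_average:
  fixes f :: "'a \<Rightarrow> real"
  assumes "finite A" "B \<subseteq> A" "B \<noteq> {}" "\<And>y. y \<in> A \<Longrightarrow> 0 \<le> f y" "(\<Sum>y\<in>A. f y) \<le> S"
  shows "\<exists>y\<in>B. f y \<le> S / real (card B)"
proof (rule ccontr)
  assume "\<not> ?thesis"
  then have "(\<Sum>y\<in>B. S / real (card B)) < (\<Sum>y\<in>B. f y)"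
    using assms(1-3) finite_subset by (intro sum_strict_mono) (auto simp: not_le)
  also have "\<dots> \<le> (\<Sum>y\<in>A. f y)" using assms by (intro sum_mono2) auto
  finally show False using assms(1-3,5) finite_subset[OF assms(2,1)] by simp
qed

text \<open>Descending one level in q costs the averaged frequencies little: the total loss over all
  a^2 successors is at most J a, while q keeps all but a of them.\<close>

lemma total_avg_freq_step:
  assumes q: "in_E q" "y \<in> q" "prefix (stem q) y"
    and I: "\<And>k. finite (I k)" "\<And>k. 0 < card (I k)" and Q: "\<And>j n. j < J \<Longrightarrow> subtree (qs j n)"
    and miss: "\<And>j n. j < J \<Longrightarrow> y \<in> qs j n \<Longrightarrow> real (card (Omega y - qs j n)) \<le> real (aT (length y))"
  shows "\<exists>y'\<in>q \<inter> Omega y.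
    total_avg_freq I qs J u y - total_avg_freq I qs J u y' \<le> 2 * real J / 2^(length y + 1)"
proof -
  define a where "a = real (aT (length y))"
  define c where "c = real (card (q \<inter> Omega y))"
  have a: "2^(length y + 1) \<le> a"
    using piT_ge_two_power[of "length y"] piT_le_aT[of "length y"] unfolding a_def
    by (metis le_trans of_nat_le_iff of_nat_numeral of_nat_power)
  moreover have "(2::real) \<le> 2^(length y + 1)" using one_le_power[of "2::real" "length y"] by simp
  ultimately have a2: "2 \<le> a" by linarith
  have "2 * a \<le> a * a" using mult_right_mono[OF a2, of a] a2 by simp
  then have c: "a * a \<le> 2 * c" "0 < c"
    using in_E_card_successors_ge[OF q] a2 unfolding a_def c_def by linarith+
  have "\<exists>y'\<in>q \<inter> Omega y. total_avg_freq I qs J u y - total_avg_freq I qs J u y' \<le> real J * a / c"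
    unfolding c_def
  proof (rule exists_le_average)
    show "q \<inter> Omega y \<noteq> {}" using c unfolding c_def by auto
    show "0 \<le> total_avg_freq I qs J u y - total_avg_freq I qs J u y'" if "y' \<in> Omega y" for y'
      using total_avg_freq_antimono[OF I(1) Q] Omega_prefix[OF that] by auto
    show "(\<Sum>y'\<in>Omega y. total_avg_freq I qs J u y - total_avg_freq I qs J u y') \<le> real J * a"
      unfolding a_def using sum_total_avg_freq_drop_le[OF I Q miss] by simp
  qed auto
  moreover have "real J * a / c \<le> 2 * real J / a"
    using mult_left_mono[OF c(1), of "real J"] a2 c(2) by (simp add: field_simps)
  moreover have "2 * real J / a \<le> 2 * real J / 2^(length y + 1)"
    using a a2 by (intro divide_left_mono) auto
  ultimately show ?thesis by (meson order_trans)
qed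

lemma exists_descendant_avg_freq:
  assumes q: "in_E q" "t \<in> q" "prefix (stem q) t" and st: "length s \<le> length t"
    and I: "\<And>k. finite (I k)" "\<And>k. 0 < card (I k)"
    and SL: "\<And>j. j < J \<Longrightarrow> sl_sequence s l (qs j)" and l: "l = 1 / real m"
    and H: "length t \<le> H"
  shows "\<exists>t'\<in>q. prefix t t' \<and> length t' = H \<and>
    (\<forall>j<J. avg_freq I (qs j) u t - 2 * real J / 2^(length t) \<le> avg_freq I (qs j) u t')"
proof -
  let ?G = "total_avg_freq I qs J u"
  have Q: "\<And>j n. j < J \<Longrightarrow> subtree (qs j n)" using SL sl_sequence_stem by blast
  have step: "\<exists>y'\<in>q \<inter> Omega y. ?G y - ?G y' \<le> 2 * real J / 2^(length y + 1)"
    if y: "y \<in> q" "prefix t y" for y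
  proof (rule total_avg_freq_step[OF q(1) y(1) _ I Q])
    show "prefix (stem q) y" using q(3) y(2) by (rule prefix_order.trans)
    fix j n assume "j < J" "y \<in> qs j n"
    then have "real (card (Omega y - qs j n)) \<le> real (aT (length y)) powr (1 - 1 / real m)"
      using sl_sequence_card_missing_le[OF SL l] st prefix_length_le[OF y(2)] by fastforce
    also have "\<dots> \<le> real (aT (length y))"
      using powr_mono[of "1 - 1 / real m" 1 "real (aT (length y))"] aT_ge_two[of "length y"] by simp
    finally show "real (card (Omega y - qs j n)) \<le> real (aT (length y))" .
  qed
  obtain t' where t': "t' \<in> q" "prefix t t'" "length t' = H"
    "?G t - ?G t' \<le> (\<Sum>i\<in>{length t..<length t + (H - length t)}. 2 * real J / 2^(i + 1))"
    using exists_descendant[OF q(2), of ?G "\<lambda>i. 2 * real J / 2^(i + 1)" "H - length t"] step H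
    by auto
  then have drop: "?G t - ?G t' \<le> 2 * real J / 2^(length t)"
    using sum_geometric_le[of "2 * real J" "length t" "length t + (H - length t)"] by simp
  have "avg_freq I (qs j) u t - avg_freq I (qs j) u t' \<le> ?G t - ?G t'" if "j < J" for j
  proof -
    have "?G t - ?G t' = (\<Sum>i<J. avg_freq I (qs i) u t - avg_freq I (qs i) u t')"
      unfolding total_avg_freq_def by (simp add: sum_subtractf)
    moreover have "0 \<le> avg_freq I (qs i) u t - avg_freq I (qs i) u t'" if "i < J" for i
      using avg_freq_antimono[OF I(1) Q[OF that] t'(2)] by simp
    then have "avg_freq I (qs j) u t - avg_freq I (qs j) u t'
        \<le> (\<Sum>i<J. avg_freq I (qs i) u t - avg_freq I (qs i) u t')"
      using that by (intro member_le_sum) auto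
    ultimately show ?thesis by simp
  qed
  then show ?thesis using t' drop by (intro bexI[of _ t']) fastforce+
qed

lemma avg_freq_ge:
  assumes "finite u" "0 \<le> c"
  shows "real (card (u \<inter> {k. c \<le> freq I Q t k})) / real (card u) * c \<le> avg_freq I Q u t"
proof -
  let ?E = "{k. c \<le> freq I Q t k}"
  have "real (card (u \<inter> ?E)) * c = (\<Sum>k\<in>u \<inter> ?E. c)" by simp
  also have "\<dots> \<le> (\<Sum>k\<in>u \<inter> ?E. freq I Q t k)" by (intro sum_mono) auto
  also have "\<dots> \<le> (\<Sum>k\<in>u. freq I Q t k)" using assms(1) freq_nonneg by (intro sum_mono2) auto
  finally show ?thesis unfolding avg_freq_def by (simp add: divide_right_mono)
qed

text \<open>Sample u is chosen to approximate \<Xi> both on the given partition and on the sets of k where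
  t is frequent in the j-th sequence; the latter have measure close to 1 because t is heavy.\<close>

lemma exists_sample_avg_freq:
  fixes B :: "nat \<Rightarrow> nat set" and qs :: "nat \<Rightarrow> nat \<Rightarrow> nat list set" and p J :: nat
  assumes FAM: "FAM \<Xi>" and I: "\<And>k. finite (I k)" "\<And>k. 0 < card (I k)"
    and SL: "\<And>j. j < J \<Longrightarrow> sl_sequence s l (qs j)"
    and m: "2 \<le> m" "3 * m < length s" "l = 1 / real m"
    and t: "\<And>j. j < J \<Longrightarrow> t \<in> lim_tree I \<Xi> (qs j)" "prefix s t" and eps: "0 < \<epsilon>"
  shows "\<exists>u. finite u \<and> u \<noteq> {} \<and> u \<inter> {..<k} = {} \<and>
    (\<forall>i<p. \<bar>real (card (u \<inter> B i)) / real (card u) - \<Xi> (B i)\<bar> < \<epsilon>) \<and>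
    (\<forall>j<J. 1 - l - \<epsilon> \<le> avg_freq I (qs j) u t)"
proof -
  define D where "D = slack (length s) (length t)"
  define E where "E j = {k. 1 - D \<le> freq I (qs j) t k}" for j
  have "D \<le> 1 / (2 * real m)" using slack_le_inverse[OF m(2)] m(1) unfolding D_def by simp
  moreover have "2 * (1 / (2 * real m)) = l" using m(3) by simp
  ultimately have D: "0 \<le> D" "2 * D \<le> l" using slack_nonneg unfolding D_def by auto
  have heavy: "1 - D \<le> \<Xi> (E j)" if "j < J" for j
    using sl_sequence_lim_tree(3)[OF FAM I SL[OF that] t(1)[OF that] t(2) prefix_order.refl]
    unfolding heavy_def D_def E_def .
  define X where "X i = (if i < p then B i else E (i - p))" for i
  obtain u where u: "finite u" "u \<noteq> {}" "u \<inter> {..<k} = {}"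
    "\<forall>i<p + J. \<bar>real (card (u \<inter> X i)) / real (card u) - \<Xi> (X i)\<bar> < \<epsilon>"
    using FAM_sample[OF FAM eps, of k "p + J" X] by blast
  have "1 - l - \<epsilon> \<le> avg_freq I (qs j) u t" if j: "j < J" for j
  proof -
    define r where "r = real (card (u \<inter> E j)) / real (card u)"
    have "\<bar>r - \<Xi> (E j)\<bar> < \<epsilon>"
      using u(4)[rule_format, of "p + j"] j unfolding X_def r_def by simp
    then have "1 - D - \<epsilon> \<le> r" using heavy[OF j] by linarith
    moreover have "l \<le> 1" using m(1,3) by simp
    then have "0 \<le> 1 - D" using D by linarith
    ultimately have "(1 - D - \<epsilon>) * (1 - D) \<le> r * (1 - D)" by (rule mult_right_mono)
    also have "\<dots> \<le> avg_freq I (qs j) u t"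
      using avg_freq_ge[OF u(1) \<open>0 \<le> 1 - D\<close>] unfolding r_def E_def .
    moreover have "(1 - D - \<epsilon>) * (1 - D) = 1 - 2 * D - \<epsilon> + D * (D + \<epsilon>)"
      by (simp add: algebra_simps)
    moreover have "0 \<le> D * (D + \<epsilon>)" using D eps by simp
    ultimately show ?thesis using D by linarith
  qed
  moreover have "\<bar>real (card (u \<inter> B i)) / real (card u) - \<Xi> (B i)\<bar> < \<epsilon>" if "i < p" for i
    using u(4)[rule_format, of i] that unfolding X_def by simp
  ultimately show ?thesis using u(1-3) by blast
qed

lemma card_indexed_family_le:
  assumes "finite W"
  shows "finite {f j n | j n. j < J \<and> n \<in> W \<and> P j n}"
    and "card {f j n | j n. j < J \<and> n \<in> W \<and> P j n} \<le> J * card W"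
proof -
  have sub: "{f j n | j n. j < J \<and> n \<in> W \<and> P j n} \<subseteq> (\<lambda>(j, n). f j n) ` ({..<J} \<times> W)" by auto
  then show "finite {f j n | j n. j < J \<and> n \<in> W \<and> P j n}" by (rule finite_subset) (simp add: assms)
  then have "card {f j n | j n. j < J \<and> n \<in> W \<and> P j n} \<le> card ((\<lambda>(j, n). f j n) ` ({..<J} \<times> W))"
    using sub assms by (intro card_mono) auto
  also have "\<dots> \<le> card ({..<J} \<times> W)" by (rule card_image_le) (simp add: assms)
  finally show "card {f j n | j n. j < J \<and> n \<in> W \<and> P j n} \<le> J * card W"
    by (simp add: card_cartesian_product)
qed

text \<open>At a node t of height H, intersect q above t with all the (at most H) members of the
  sequences indexed in the sample that contain t.\<close>

lemma exists_thin_condition: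
  assumes q: "in_E q" "t \<in> q" "prefix (stem q) t"
    and H: "2 * length (stem q) \<le> length t" "2 * m \<le> length t" "1 \<le> m" "length s \<le> length t"
      "J * card (\<Union>k\<in>u. I k) \<le> length t"
    and I: "\<And>k. finite (I k)" and u: "finite u"
    and SL: "\<And>j. j < J \<Longrightarrow> sl_sequence s l (qs j)" and l: "l = 1 / real m"
  shows "\<exists>q'. in_E q' \<and> q' \<subseteq> q \<and> (\<forall>j<J. avg_freq I (qs j) u t \<le>
     1 / real (card u) * (\<Sum>k\<in>u. real (card {n \<in> I k. q' \<subseteq> qs j n}) / real (card (I k))))"
proof -
  define W where "W = (\<Union>k\<in>u. I k)"
  define Ps where "Ps = {qs j n | j n. j < J \<and> n \<in> W \<and> t \<in> qs j n}"
  have W: "finite W" unfolding W_def using u I by blast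
  have Ps_norm: "subtree p \<and> t \<in> p \<and>
      (\<forall>x\<in>p. prefix t x \<longrightarrow> real (card (Omega x - p)) \<le> real (aT (length x)) powr (1 - 1/real m))"
    if "p \<in> Ps" for p
  proof -
    obtain j n where jn: "p = qs j n" "j < J" "t \<in> qs j n" using \<open>p \<in> Ps\<close> unfolding Ps_def by blast
    have "real (card (Omega x - p)) \<le> real (aT (length x)) powr (1 - 1/real m)"
      if "x \<in> p" "prefix t x" for x
      using sl_sequence_card_missing_le[OF SL[OF jn(2)] l, of x n] that jn(1) H(4)
        prefix_length_le[OF that(2)] by simp
    then show ?thesis using sl_sequence_stem(1)[OF SL[OF jn(2)]] jn by blast
  qed
  have Ps_finite: "finite Ps" using card_indexed_family_le(1)[OF W] unfolding Ps_def .
  have Ps_card: "card Ps \<le> length t"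
    using card_indexed_family_le(2)[OF W] H(5) unfolding Ps_def W_def by (rule le_trans)
  note thin = in_E_thin[OF q H(1-3) Ps_finite Ps_card Ps_norm]
  have "avg_freq I (qs j) u t \<le>
     1 / real (card u) * (\<Sum>k\<in>u. real (card {n \<in> I k. thin q t Ps \<subseteq> qs j n}) / real (card (I k)))"
    if j: "j < J" for j
    unfolding avg_freq_def freq_def
  proof (intro mult_left_mono sum_mono divide_right_mono)
    fix k assume "k \<in> u"
    have "{n \<in> I k. t \<in> qs j n} \<subseteq> {n \<in> I k. thin q t Ps \<subseteq> qs j n}"
    proof
      fix n assume n: "n \<in> {n \<in> I k. t \<in> qs j n}"
      then have "qs j n \<in> Ps" using j \<open>k \<in> u\<close> unfolding Ps_def W_def by blast
      then show "n \<in> {n \<in> I k. thin q t Ps \<subseteq> qs j n}" using thin(3) n by blast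
    qed
    then show "real (card {n \<in> I k. t \<in> qs j n}) \<le> real (card {n \<in> I k. thin q t Ps \<subseteq> qs j n})"
      using I by (simp add: card_mono)
  qed auto
  then show ?thesis using thin(1,2) by blast
qed

lemma exists_condition_avg_freq:
  assumes q: "in_E q" "t \<in> q" "prefix (stem q) t" and st: "length s \<le> length t"
    and I: "\<And>k. finite (I k)" "\<And>k. 0 < card (I k)" and u: "finite u"
    and SL: "\<And>j. j < J \<Longrightarrow> sl_sequence s l (qs j)" and m: "1 \<le> m" "l = 1 / real m"
  shows "\<exists>q'. in_E q' \<and> q' \<subseteq> q \<and> (\<forall>j<J. avg_freq I (qs j) u t - 2 * real J / 2^(length t) \<le>
     1 / real (card u) * (\<Sum>k\<in>u. real (card {n \<in> I k. q' \<subseteq> qs j n}) / real (card (I k))))"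
proof -
  define H where "H = max (length t) (max (2 * length (stem q)) (max (2 * m) (J * card (\<Union>k\<in>u. I k))))"
  have "length t \<le> H" unfolding H_def by simp
  then obtain t' where t': "t' \<in> q" "prefix t t'" "length t' = H"
    "\<forall>j<J. avg_freq I (qs j) u t - 2 * real J / 2^(length t) \<le> avg_freq I (qs j) u t'"
    using exists_descendant_avg_freq[where I = I and J = J and qs = qs and u = u,
        OF q st I SL m(2)] by blast
  have "2 * length (stem q) \<le> length t'" "2 * m \<le> length t'" "length s \<le> length t'"
      "J * card (\<Union>k\<in>u. I k) \<le> length t'"
    using t'(3) st unfolding H_def by auto
  then obtain q' where "in_E q'" "q' \<subseteq> q" "\<forall>j<J. avg_freq I (qs j) u t' \<le>
     1 / real (card u) * (\<Sum>k\<in>u. real (card {n \<in> I k. q' \<subseteq> qs j n}) / real (card (I k)))"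
    using exists_thin_condition[where I = I and J = J and qs = qs and u = u,
        OF q(1) t'(1) prefix_order.trans[OF q(3) t'(2)] _ _ m(1) _ _ I(1) u SL m(2)]
    by blast
  then show ?thesis using t'(4) by (meson order_trans)
qed

lemma exists_node_in_lim_tree:
  assumes q: "in_E q" "q \<subseteq> lim_tree I \<Xi> Q" and sl: "sl_sequence s l Q"
    and h: "length s \<le> h" "length (stem q) \<le> h"
  shows "\<exists>t\<in>q. prefix (stem q) t \<and> prefix s t \<and> length t = h"
proof -
  obtain t where t: "t \<in> q" "prefix (stem q) t" "length t = h"
    using in_E_exists_node_at_height[OF q(1) h(2)] by blast
  then have "prefix t s \<or> prefix s t" using lim_tree_comparable[OF sl] q(2) by blast
  then have "prefix s t" using prefix_length_antisym[of t s] h(1) t(3) by auto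
  then show ?thesis using t by blast
qed

lemma exists_sample_condition:
  fixes qs :: "nat \<Rightarrow> nat \<Rightarrow> nat list set" and B :: "nat \<Rightarrow> nat set"
  assumes FAM: "FAM \<Xi>" and I: "\<And>k. finite (I k)" "\<And>k. 0 < card (I k)"
    and SL: "\<And>j. j < J \<Longrightarrow> sl_sequence s l (qs j)" and J: "0 < J" and eps: "0 < \<epsilon>"
    and q: "in_E q" "\<And>j. j < J \<Longrightarrow> q \<subseteq> lim_tree I \<Xi> (qs j)"
  shows "\<exists>u q'. finite u \<and> u \<noteq> {} \<and> u \<inter> {..<kstar} = {} \<and> in_E q' \<and> q' \<subseteq> q \<and>
     (\<forall>i<mstar. \<bar>real (card (u \<inter> B i)) / real (card u) - \<Xi> (B i)\<bar> < \<epsilon>) \<and>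
     (\<forall>j<J. 1 - l - \<epsilon> \<le>
        1 / real (card u) * (\<Sum>k\<in>u. real (card {n \<in> I k. q' \<subseteq> qs j n}) / real (card (I k))))"
proof -
  obtain m where m: "2 \<le> m" "3 * m < length s" "l = 1 / real m"
    using sl_sequence_loss[OF SL[OF J]] by blast
  define h where "h = max (length s) (length (stem q)) + nat \<lceil>4 * real J / \<epsilon>\<rceil>"
  have "length s \<le> h" "length (stem q) \<le> h" unfolding h_def by simp_all
  then obtain t where t: "t \<in> q" "prefix (stem q) t" "prefix s t" "length t = h"
    using exists_node_in_lim_tree[OF q(1) q(2)[OF J] SL[OF J]] by blast
  have t_lim: "t \<in> lim_tree I \<Xi> (qs j)" if "j < J" for j using q(2)[OF that] t(1) by blast
  have eps2: "0 < \<epsilon> / 2" using eps by simp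
  obtain u where u: "finite u" "u \<noteq> {}" "u \<inter> {..<kstar} = {}"
    "\<forall>i<mstar. \<bar>real (card (u \<inter> B i)) / real (card u) - \<Xi> (B i)\<bar> < \<epsilon> / 2"
    "\<forall>j<J. 1 - l - \<epsilon> / 2 \<le> avg_freq I (qs j) u t"
    using exists_sample_avg_freq[where I = I and J = J and qs = qs and k = kstar and p = mstar and B = B,
        OF FAM I SL m t_lim t(3) eps2]
    by blast
  have st: "length s \<le> length t" and m1: "1 \<le> m" using prefix_length_le[OF t(3)] m(1) by simp_all
  obtain q' where q': "in_E q'" "q' \<subseteq> q" "\<forall>j<J. avg_freq I (qs j) u t - 2 * real J / 2^h \<le>
      1 / real (card u) * (\<Sum>k\<in>u. real (card {n \<in> I k. q' \<subseteq> qs j n}) / real (card (I k)))"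
    using exists_condition_avg_freq[where I = I and J = J and qs = qs and u = u,
        OF q(1) t(1,2) st I u(1) SL m1 m(3)] t(4) by blast
  have "4 * real J / \<epsilon> \<le> real h" unfolding h_def by linarith
  also have "\<dots> \<le> real (2^h)" using less_exp[of h] by (simp only: of_nat_le_iff less_imp_le)
  finally have "2 * real J / 2^h \<le> \<epsilon> / 2" using eps by (simp add: field_simps)
  then have "1 - l - \<epsilon> \<le>
      1 / real (card u) * (\<Sum>k\<in>u. real (card {n \<in> I k. q' \<subseteq> qs j n}) / real (card (I k)))"
    if "j < J" for j
    using u(5)[rule_format, OF that] q'(3)[rule_format, OF that] by linarith
  moreover have "\<bar>real (card (u \<inter> B i)) / real (card u) - \<Xi> (B i)\<bar> < \<epsilon>" if "i < mstar" for i
    using u(4)[rule_format, OF that] eps by linarith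
  ultimately show ?thesis using u(1-3) q'(1,2) by blast
qed

lemma FAM_lim_strong:
  fixes qs :: "nat \<Rightarrow> nat \<Rightarrow> nat list set" and B :: "nat \<Rightarrow> nat set"
  assumes FAM: "FAM \<Xi>" and I: "\<And>k. finite (I k)" "\<And>k. 0 < card (I k)"
    and SL: "\<forall>j<J. sl_sequence s l (qs j)" and eps: "0 < \<epsilon>"
    and q: "in_E q" "\<forall>j<J. q \<subseteq> FAM_lim I \<Xi> (qs j)"
  shows "\<exists>u q'. finite u \<and> u \<noteq> {} \<and> u \<inter> {..<kstar} = {} \<and> in_E q' \<and> q' \<subseteq> q \<and>
     (\<forall>i<mstar. \<Xi> (B i) - \<epsilon> < real (card (u \<inter> B i)) / real (card u) \<and>
                real (card (u \<inter> B i)) / real (card u) < \<Xi> (B i) + \<epsilon>) \<and>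
     (\<forall>j<J. 1 / real (card u) *
         (\<Sum>k\<in>u. real (card {n \<in> I k. q' \<subseteq> qs j n}) / real (card (I k))) \<ge> 1 - l - \<epsilon>)"
proof -
  have "\<exists>u q'. finite u \<and> u \<noteq> {} \<and> u \<inter> {..<kstar} = {} \<and> in_E q' \<and> q' \<subseteq> q \<and>
     (\<forall>i<mstar. \<bar>real (card (u \<inter> B i)) / real (card u) - \<Xi> (B i)\<bar> < \<epsilon>) \<and>
     (\<forall>j<J. 1 - l - \<epsilon> \<le>
        1 / real (card u) * (\<Sum>k\<in>u. real (card {n \<in> I k. q' \<subseteq> qs j n}) / real (card (I k))))"
  proof (cases "J = 0")
    case True
    obtain u where "finite u" "u \<noteq> {}" "u \<inter> {..<kstar} = {}"
      "\<forall>i<mstar. \<bar>real (card (u \<inter> B i)) / real (card u) - \<Xi> (B i)\<bar> < \<epsilon>"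
      using FAM_sample[OF FAM eps, of kstar mstar B] by blast
    then show ?thesis using q(1) True by (intro exI[of _ u] exI[of _ q]) simp
  next
    case False
    have SL': "sl_sequence s l (qs j)" if "j < J" for j using SL that by blast
    have q_lim: "q \<subseteq> lim_tree I \<Xi> (qs j)" if "j < J" for j
    proof -
      have "FAM_lim I \<Xi> (qs j) = lim_tree I \<Xi> (qs j)" using SL that unfolding FAM_lim_def by auto
      then show ?thesis using q(2)[rule_format, OF that] by simp
    qed
    have "0 < J" using False by blast
    with exists_sample_condition[where I = I and J = J and qs = qs and q = q and \<Xi> = \<Xi> and s = s
        and l = l and \<epsilon> = \<epsilon> and kstar = kstar and mstar = mstar and B = B]
    show ?thesis using FAM I SL' eps q(1) q_lim by blast
  qed
  then obtain u q' where uq: "finite u" "u \<noteq> {}" "u \<inter> {..<kstar} = {}" "in_E q'" "q' \<subseteq> q"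
    "\<forall>i<mstar. \<bar>real (card (u \<inter> B i)) / real (card u) - \<Xi> (B i)\<bar> < \<epsilon>"
    "\<forall>j<J. 1 - l - \<epsilon> \<le>
        1 / real (card u) * (\<Sum>k\<in>u. real (card {n \<in> I k. q' \<subseteq> qs j n}) / real (card (I k)))"
    by blast
  have "\<Xi> (B i) - \<epsilon> < real (card (u \<inter> B i)) / real (card u) \<and>
      real (card (u \<inter> B i)) / real (card u) < \<Xi> (B i) + \<epsilon>" if "i < mstar" for i
    using uq(6)[rule_format, OF that] by linarith
  then show ?thesis using uq by (intro exI[of _ u] exI[of _ q']) simp
qed

theorem lemma1:
  fixes I :: "nat \<Rightarrow> nat set" and \<Xi> :: "nat set \<Rightarrow> real"
  assumes "interval_partition I"
    and "filterlim (\<lambda>k. card (I k)) at_top sequentially"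
    and "FAM \<Xi>"
  shows "\<exists>limf. (\<forall>qs. (\<forall>n. in_E (qs n)) \<longrightarrow> in_E (limf qs)) \<and>
               strong_FAM_limit_intervals I \<Xi> limf"
proof -
  obtain b where b: "strict_mono b" "\<And>k. I k = {b k..<b (Suc k)}"
    using assms(1) unfolding interval_partition_def by blast
  have I: "finite (I k)" "0 < card (I k)" for k
    using b strict_monoD[OF b(1), of k "Suc k"] by simp_all
  show ?thesis
  proof (intro exI[of _ "FAM_lim I \<Xi>"] conjI allI impI)
    show "in_E (FAM_lim I \<Xi> qs)" if "\<forall>n. in_E (qs n)" for qs
      using in_E_FAM_lim[OF assms(3) I that] .
    show "strong_FAM_limit_intervals I \<Xi> (FAM_lim I \<Xi>)"
      unfolding strong_FAM_limit_intervals_def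
      by (intro allI impI, elim conjE, rule FAM_lim_strong[OF assms(3) I]) assumption+
  qed
qed

end
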